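(* Let $H:\mathbb{R}_+\to[0,1]$ be a measurable function with $\|H\|_1:=\int_0^\infty H(x)\,dx<\infty$ and $\|H\|_2^2:=\int_0^\infty H(x)^2\,dx<\|H\|_1$. Fix $\tau>0$, $\alpha>0$, and a positive integer $L$; set $R_L=\ln(\tau L)/(2\|H\|_1)$. Let $\mathcal{P}_L$ be a Poisson point process of unit intensity on the torus $[0,L]$ (with $0$ and $L$ identified), with circular distance $\rho^L(x,y)=\min\{|x-y|,L-|x-y|\}$, and let $\tilde h^L(x,y)=H(\rho^L(x,y)/R_L)\mathbb{1}\{\rho^L(x,y)\le R_L^{1+1/\alpha}\}$. Let $\mathcal{G}_{\tilde h^L}(\mathcal{P}_L)$ be the random graph on vertex set $\mathcal{P}_L$ in which, conditionally on $\mathcal{P}_L$, each pair of distinct nodes $x,y$ is joined by an edge with probability $\tilde h^L(x,y)$, independently over pairs. For $m\in\mathbb{N}$, divide the torus into segments $A_i=[(i-1)/m,i/m)$, $i\in\Gamma=\{1,\dots,mL\}$, with centres $x_i$, and let $I_i$ be the indicator that $A_i$ contains exactly one node of $\mathcal{P}_L$ and that node is isolated in $\mathcal{G}_{\tilde h^L}(\mathcal{P}_L)$. Let $B_i=\{j\in\Gamma:\rho^L(x_i,x_j)\le 3R_L^{1+1/\alpha}\}$, $p_i=\mathbb{E}[I_i]$, and $$b_3=\sum_{i\in\Gamma}\mathbb{E}\Big[\big|\mathbb{E}[I_i\mid (I_j:j\in\Gamma\setminus B_i)]-p_i\big|\Big].$$ Then $b_3=0$ for all $m$ sufficiently large. 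*)

theory Defs
  imports "HOL-Probability.Probability"
begin

type_synonym omega = "nat \<times> (nat \<Rightarrow> real) \<times> (nat \<times> nat \<Rightarrow> real)"

definition rhoL :: "real \<Rightarrow> real \<Rightarrow> real \<Rightarrow> real" where
  "rhoL L x y = min \<bar>x - y\<bar> (L - \<bar>x - y\<bar>)"

definition normH1 :: "(real \<Rightarrow> real) \<Rightarrow> real" where
  "normH1 H = (LBINT x:{0..}. H x)"

definition RL :: "(real \<Rightarrow> real) \<Rightarrow> real \<Rightarrow> nat \<Rightarrow> real" where
  "RL H \<tau> L = ln (\<tau> * real L) / (2 * normH1 H)"

definition htil :: "(real \<Rightarrow> real) \<Rightarrow> real \<Rightarrow> real \<Rightarrow> nat \<Rightarrow> real \<Rightarrow> real \<Rightarrow> real" where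
  "htil H \<tau> \<alpha> L x y =
     H (rhoL (real L) x y / RL H \<tau> L) *
     (if rhoL (real L) x y \<le> RL H \<tau> L powr (1 + 1 / \<alpha>) then 1 else 0)"

text \<open>Probability space: number of points N ~ Poisson(L), points X k i.i.d. uniform on [0,L)
  (so that the first N of them form a unit-intensity Poisson process on the torus), and
  i.i.d. uniform [0,1] edge marks U (k,l) used for the pair {k,l} with k < l.\<close>
definition PPP_space :: "nat \<Rightarrow> omega measure" where
  "PPP_space L =
     measure_pmf (poisson_pmf (real L)) \<Otimes>\<^sub>M
     ((PiM UNIV (\<lambda>_::nat. uniform_measure lborel {0..<real L})) \<Otimes>\<^sub>M
      (PiM UNIV (\<lambda>_::nat \<times> nat. uniform_measure lborel {0..1::real})))"

definition Npts :: "omega \<Rightarrow> nat" where "Npts \<omega> = fst \<omega>"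
definition Xpt :: "omega \<Rightarrow> nat \<Rightarrow> real" where "Xpt \<omega> = fst (snd \<omega>)"
definition Umark :: "omega \<Rightarrow> nat \<times> nat \<Rightarrow> real" where "Umark \<omega> = snd (snd \<omega>)"

text \<open>Nodes k and l (both < N) are joined iff k \<noteq> l and the mark of the pair is below
  the connection probability; conditionally on the points this happens independently
  with probability htil.\<close>
definition edge :: "(real \<Rightarrow> real) \<Rightarrow> real \<Rightarrow> real \<Rightarrow> nat \<Rightarrow> omega \<Rightarrow> nat \<Rightarrow> nat \<Rightarrow> bool" where
  "edge H \<tau> \<alpha> L \<omega> k l \<longleftrightarrow>
     k \<noteq> l \<and> Umark \<omega> (min k l, max k l) < htil H \<tau> \<alpha> L (Xpt \<omega> k) (Xpt \<omega> l)"

definition segA :: "nat \<Rightarrow> nat \<Rightarrow> real set" where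
  "segA m i = {(real i - 1) / real m ..< real i / real m}"

definition centre :: "nat \<Rightarrow> nat \<Rightarrow> real" where
  "centre m i = (2 * real i - 1) / (2 * real m)"

definition Gamma :: "nat \<Rightarrow> nat \<Rightarrow> nat set" where
  "Gamma m L = {1 .. m * L}"

definition Iind :: "(real \<Rightarrow> real) \<Rightarrow> real \<Rightarrow> real \<Rightarrow> nat \<Rightarrow> nat \<Rightarrow> nat \<Rightarrow> omega \<Rightarrow> real" where
  "Iind H \<tau> \<alpha> L m i \<omega> =
     (if card {k. k < Npts \<omega> \<and> Xpt \<omega> k \<in> segA m i} = 1 \<and>
         (\<forall>k < Npts \<omega>. Xpt \<omega> k \<in> segA m i \<longrightarrow> (\<forall>l < Npts \<omega>. \<not> edge H \<tau> \<alpha> L \<omega> k l))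
      then 1 else 0)"

definition Bnb :: "(real \<Rightarrow> real) \<Rightarrow> real \<Rightarrow> real \<Rightarrow> nat \<Rightarrow> nat \<Rightarrow> nat \<Rightarrow> nat set" where
  "Bnb H \<tau> \<alpha> L m i =
     {j \<in> Gamma m L. rhoL (real L) (centre m i) (centre m j) \<le> 3 * RL H \<tau> L powr (1 + 1 / \<alpha>)}"

definition Fout :: "(real \<Rightarrow> real) \<Rightarrow> real \<Rightarrow> real \<Rightarrow> nat \<Rightarrow> nat \<Rightarrow> nat \<Rightarrow> omega measure" where
  "Fout H \<tau> \<alpha> L m i =
     sigma (space (PPP_space L))
       (\<Union>j \<in> Gamma m L - Bnb H \<tau> \<alpha> L m i.
          {Iind H \<tau> \<alpha> L m j -` A \<inter> space (PPP_space L) | A. A \<in> sets borel})"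

definition pI :: "(real \<Rightarrow> real) \<Rightarrow> real \<Rightarrow> real \<Rightarrow> nat \<Rightarrow> nat \<Rightarrow> nat \<Rightarrow> real" where
  "pI H \<tau> \<alpha> L m i = (\<integral>\<omega>. Iind H \<tau> \<alpha> L m i \<omega> \<partial>PPP_space L)"

definition b3 :: "(real \<Rightarrow> real) \<Rightarrow> real \<Rightarrow> real \<Rightarrow> nat \<Rightarrow> nat \<Rightarrow> real" where
  "b3 H \<tau> \<alpha> L m =
     (\<Sum>i \<in> Gamma m L.
        \<integral>\<omega>. \<bar>real_cond_exp (PPP_space L) (Fout H \<tau> \<alpha> L m i) (Iind H \<tau> \<alpha> L m i) \<omega>
               - pI H \<tau> \<alpha> L m i\<bar> \<partial>PPP_space L)"

end

theory Submission
  imports Defs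
begin

text \<open>
  Conditionally on their number, the points of the Poisson process are i.i.d. uniform on the torus
  and the edge marks are i.i.d. uniform on [0, 1], independently of the points. Choose a region
  \<open>R\<close> around the segment \<open>A\<^sub>i\<close> such that the indicator \<open>I\<^sub>i\<close> only depends on the points in \<open>R\<close> and
  their marks, while \<open>I\<^sub>j\<close> only depends on the points outside \<open>R\<close> whenever \<open>j \<notin> B\<^sub>i\<close>; this is
  possible as soon as the mesh \<open>1/m\<close> is smaller than the connection range \<open>R\<^sub>L\<^bsup>1+1/\<alpha>\<^esup>\<close>.
  Splitting a Poisson number of i.i.d. points according to whether they fall into \<open>R\<close> gives two
  independent Poisson processes (for a fixed number of points the joint probabilities are binomial
  convolutions, so their exponential generating series factors). Thus \<open>I\<^sub>i\<close> is independent of the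
  \<open>\<sigma>\<close>-algebra generated by the far indicators, and the conditional expectation in \<open>b\<^sub>3\<close> is
  almost surely \<open>p\<^sub>i\<close>.
\<close>

section \<open>Counting and exponential series\<close>

lemma sum_Pow_card:
  fixes f :: "nat \<Rightarrow> 'a::comm_semiring_1"
  assumes "finite A"
  shows "(\<Sum>s\<in>Pow A. f (card s)) = (\<Sum>r\<le>card A. of_nat (card A choose r) * f r)"
proof -
  have "(\<Sum>s\<in>Pow A. f (card s)) = (\<Sum>r\<le>card A. \<Sum>s\<in>{s. s \<in> Pow A \<and> card s = r}. f (card s))"
    using assms by (intro sum.group[symmetric]) (auto intro: card_mono)
  also have "\<dots> = (\<Sum>r\<le>card A. of_nat (card A choose r) * f r)"
    using n_subsets[OF assms] by simp
  finally show ?thesis .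
qed

lemma obtain_permutes_onto_prefix:
  assumes s: "s \<subseteq> {..<n}"
  obtains \<pi> where "\<pi> permutes {..<n}" and "\<pi> ` {..<card s} = s"
proof -
  let ?r = "card s"
  have fin: "finite s" using s finite_subset by blast
  have rn: "?r \<le> n" using card_mono[OF _ s] by simp
  obtain h1 where h1: "bij_betw h1 {..<?r} s"
    using finite_same_card_bij[of "{..<?r}" s] fin by auto
  obtain h2 where h2: "bij_betw h2 {?r..<n} ({..<n} - s)"
    using finite_same_card_bij[of "{?r..<n}" "{..<n} - s"] fin s by (auto simp: card_Diff_subset)
  define \<pi> where "\<pi> k = (if k < ?r then h1 k else if k < n then h2 k else k)" for k
  have low: "bij_betw \<pi> {..<?r} s"
    using h1 by (rule bij_betw_cong[THEN iffD1, rotated]) (simp add: \<pi>_def)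
  have "bij_betw \<pi> {?r..<n} ({..<n} - s)"
    using h2 by (rule bij_betw_cong[THEN iffD1, rotated]) (simp add: \<pi>_def)
  with low have "bij_betw \<pi> ({..<?r} \<union> {?r..<n}) (s \<union> ({..<n} - s))"
    by (rule bij_betw_combine) blast
  moreover have "{..<?r} \<union> {?r..<n} = {..<n}" "s \<union> ({..<n} - s) = {..<n}"
    using rn s by auto
  ultimately have "\<pi> permutes {..<n}"
    by (intro bij_imp_permutes) (auto simp: \<pi>_def)
  moreover have "\<pi> ` {..<?r} = s"
    using low by (simp add: bij_betw_def)
  ultimately show thesis by (rule that)
qed

lemma permutes_all_lessThan_iff:
  assumes "\<pi> permutes {..<n}"
  shows "(\<forall>k<n. P (\<pi> k)) \<longleftrightarrow> (\<forall>k<n. P k)"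
proof -
  have "(\<forall>j\<in>\<pi> ` {..<n}. P j) \<longleftrightarrow> (\<forall>k<n. P (\<pi> k))"
    by auto
  then show ?thesis
    using permutes_image[OF assms] by auto
qed

lemma card_Collect_less_shift:
  fixes n r :: nat
  assumes "\<And>k. k < n \<Longrightarrow> P k \<Longrightarrow> r \<le> k"
  shows "card {k. k < n \<and> P k} = card {k. k < n - r \<and> P (k + r)}"
proof -
  have "{k. k < n \<and> P k} = (\<lambda>k. k + r) ` {k. k < n - r \<and> P (k + r)}"
  proof (intro set_eqI iffI)
    fix k assume k: "k \<in> {k. k < n \<and> P k}"
    with assms have "r \<le> k"
      by blast
    with k show "k \<in> (\<lambda>k. k + r) ` {k. k < n - r \<and> P (k + r)}"
      by (intro image_eqI[of _ _ "k - r"]) auto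
  qed auto
  then show ?thesis
    by (simp add: card_image inj_on_def)
qed

lemma all_less_shift_iff:
  fixes n r :: nat
  assumes shifted: "\<And>k. k < n \<Longrightarrow> P k \<Longrightarrow> r \<le> k"
    and low: "\<And>k l. k < n \<Longrightarrow> P k \<Longrightarrow> l < r \<Longrightarrow> Q k l"
  shows "(\<forall>k<n. P k \<longrightarrow> (\<forall>l<n. Q k l)) \<longleftrightarrow> (\<forall>k<n - r. P (k + r) \<longrightarrow> (\<forall>l<n - r. Q (k + r) (l + r)))"
proof
  assume "\<forall>k<n. P k \<longrightarrow> (\<forall>l<n. Q k l)"
  then show "\<forall>k<n - r. P (k + r) \<longrightarrow> (\<forall>l<n - r. Q (k + r) (l + r))"
    by (auto simp: less_diff_conv)
next
  assume high: "\<forall>k<n - r. P (k + r) \<longrightarrow> (\<forall>l<n - r. Q (k + r) (l + r))"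
  show "\<forall>k<n. P k \<longrightarrow> (\<forall>l<n. Q k l)"
  proof (intro allI impI)
    fix k l assume k: "k < n" "P k" and l: "l < n"
    show "Q k l"
    proof (cases "l < r")
      case False
      moreover have "r \<le> k"
        using shifted k by blast
      ultimately have "k - r < n - r" "l - r < n - r" "k - r + r = k" "l - r + r = l"
        using k l by auto
      then show ?thesis
        using high k by metis
    qed (use low k in blast)
  qed
qed

lemma sums_exp_binomial_convolution:
  fixes a b :: "nat \<Rightarrow> real"
  assumes "\<And>r. \<bar>a r\<bar> \<le> A" and "\<And>r. \<bar>b r\<bar> \<le> B"
  shows "(\<lambda>n. x ^ n / fact n * (\<Sum>r\<le>n. real (n choose r) * (a r * b (n - r))))
           sums ((\<Sum>r. x ^ r / fact r * a r) * (\<Sum>r. x ^ r / fact r * b r))"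
proof -
  have abs_summable: "summable (\<lambda>r. norm (x ^ r / fact r * c r))" if "\<And>r. \<bar>c r\<bar> \<le> C" for c C
  proof (rule summable_comparison_test'[where N = 0])
    show "summable (\<lambda>r. \<bar>x\<bar> ^ r / fact r * C)"
      using summable_exp[of "\<bar>x\<bar>"] by (intro summable_mult2) (simp add: divide_inverse mult.commute)
    show "norm (norm (x ^ r / fact r * c r)) \<le> \<bar>x\<bar> ^ r / fact r * C" for r
      using that[of r] by (simp add: abs_mult power_abs mult_left_mono divide_right_mono)
  qed
  have "x ^ n / fact n * (real (n choose r) * (a r * b (n - r)))
      = x ^ r / fact r * a r * (x ^ (n - r) / fact (n - r) * b (n - r))" if "r \<le> n" for n r
    using that by (simp add: binomial_fact power_add[symmetric] field_simps)
  then have convolution: "(\<lambda>n. x ^ n / fact n * (\<Sum>r\<le>n. real (n choose r) * (a r * b (n - r))))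
      = (\<lambda>n. \<Sum>r\<le>n. x ^ r / fact r * a r * (x ^ (n - r) / fact (n - r) * b (n - r)))"
    by (simp add: sum_distrib_left)
  show ?thesis
    unfolding convolution by (rule Cauchy_product_sums[OF abs_summable[OF assms(1)] abs_summable[OF assms(2)]])
qed

section \<open>Product probability spaces and independence\<close>

lemma Plus_vimage_Inl_Inr: "Inl -` A <+> Inr -` A = A"
proof (intro set_eqI iffI)
  show "x \<in> Inl -` A <+> Inr -` A" if "x \<in> A" for x
    using that by (cases x) auto
qed auto

lemma measurable_case_sum_pair:
  "(\<lambda>\<omega>. case_sum (fst \<omega>) (snd \<omega>)) \<in> Pi\<^sub>M UNIV M \<Otimes>\<^sub>M Pi\<^sub>M UNIV N \<rightarrow>\<^sub>M Pi\<^sub>M UNIV (case_sum M N)"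
proof (rule measurable_PiM_single')
  show "(\<lambda>\<omega>. case_sum (fst \<omega>) (snd \<omega>) i) \<in> Pi\<^sub>M UNIV M \<Otimes>\<^sub>M Pi\<^sub>M UNIV N \<rightarrow>\<^sub>M case_sum M N i" for i
    by (cases i) simp_all
qed (auto simp: space_pair_measure space_PiM PiE_iff split: sum.split)

lemma vimage_case_sum_prod_emb:
  "(\<lambda>\<omega>. case_sum (fst \<omega>) (snd \<omega>)) -` prod_emb UNIV (case_sum M N) J (Pi\<^sub>E J A) \<inter> space (Pi\<^sub>M UNIV M \<Otimes>\<^sub>M Pi\<^sub>M UNIV N)
     = prod_emb UNIV M (Inl -` J) (Pi\<^sub>E (Inl -` J) (A \<circ> Inl)) \<times> prod_emb UNIV N (Inr -` J) (Pi\<^sub>E (Inr -` J) (A \<circ> Inr))"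
  by (auto simp: prod_emb_def PiE_iff space_pair_measure space_PiM split: sum.splits)

lemma distr_case_sum_pair_PiM:
  fixes M :: "'i \<Rightarrow> 'a measure" and N :: "'j \<Rightarrow> 'a measure"
  assumes "\<And>i. prob_space (M i)" and "\<And>j. prob_space (N j)"
  shows "distr (Pi\<^sub>M UNIV M \<Otimes>\<^sub>M Pi\<^sub>M UNIV N) (Pi\<^sub>M UNIV (case_sum M N)) (\<lambda>\<omega>. case_sum (fst \<omega>) (snd \<omega>))
           = Pi\<^sub>M UNIV (case_sum M N)"
    (is "distr ?P ?S ?f = ?S")
proof (rule measure_eqI_PiM_infinite)
  have PiM_probs: "prob_space (Pi\<^sub>M UNIV M)" "prob_space (Pi\<^sub>M UNIV N)"
    using assms by (auto intro: prob_space_PiM)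
  interpret P: prob_space ?P
    using PiM_probs by (rule prob_space_pair)
  show "finite_measure (distr ?P ?S ?f)"
    by (intro prob_space.finite_measure P.prob_space_distr measurable_case_sum_pair)
  fix J :: "('i + 'j) set" and A
  assume J: "finite J" "J \<subseteq> UNIV" and A: "\<And>i. i \<in> J \<Longrightarrow> A i \<in> sets (case_sum M N i)"
  have fin: "finite (Inl -` J)" "finite (Inr -` J)"
    using J by (auto intro: finite_vimageI)
  have A_Inl: "A (Inl k) \<in> sets (M k)" if "k \<in> Inl -` J" for k
    using A that by force
  have A_Inr: "A (Inr k) \<in> sets (N k)" if "k \<in> Inr -` J" for k
    using A that by force
  have "emeasure (distr ?P ?S ?f) (prod_emb UNIV (case_sum M N) J (Pi\<^sub>E J A))
      = emeasure ?P (prod_emb UNIV M (Inl -` J) (Pi\<^sub>E (Inl -` J) (A \<circ> Inl)) \<times>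
                     prod_emb UNIV N (Inr -` J) (Pi\<^sub>E (Inr -` J) (A \<circ> Inr)))"
    using A J
    by (subst emeasure_distr[OF measurable_case_sum_pair])
      (auto intro!: sets_PiM_I simp: vimage_case_sum_prod_emb)
  also have "\<dots> = emeasure (Pi\<^sub>M UNIV M) (prod_emb UNIV M (Inl -` J) (Pi\<^sub>E (Inl -` J) (A \<circ> Inl))) *
                  emeasure (Pi\<^sub>M UNIV N) (prod_emb UNIV N (Inr -` J) (Pi\<^sub>E (Inr -` J) (A \<circ> Inr)))"
    using A_Inl A_Inr fin PiM_probs(2)
    by (intro sigma_finite_measure.emeasure_pair_measure_Times prob_space_imp_sigma_finite sets_PiM_I) auto
  also have "\<dots> = (\<Prod>k\<in>Inl -` J. emeasure (M k) (A (Inl k))) * (\<Prod>k\<in>Inr -` J. emeasure (N k) (A (Inr k)))"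
    using A_Inl A_Inr fin assms by (subst (1 2) emeasure_PiM_emb) auto
  also have "\<dots> = (\<Prod>i\<in>J. emeasure (case_sum M N i) (A i))"
    using fin by (subst (3) Plus_vimage_Inl_Inr[symmetric]) (simp add: prod.Plus comp_def)
  also have "\<dots> = emeasure ?S (prod_emb UNIV (case_sum M N) J (Pi\<^sub>E J A))"
    using A J assms by (intro emeasure_PiM_emb[symmetric]) (auto split: sum.split)
  finally show "emeasure (distr ?P ?S ?f) (prod_emb UNIV (case_sum M N) J (Pi\<^sub>E J A))
      = emeasure ?S (prod_emb UNIV (case_sum M N) J (Pi\<^sub>E J A))" .
qed simp_all

lemma indep_vars_case_sum_pair:
  assumes "\<And>i. prob_space (M i)" and "\<And>j. prob_space (N j)"
  shows "prob_space.indep_vars (Pi\<^sub>M UNIV M \<Otimes>\<^sub>M Pi\<^sub>M UNIV N) (case_sum M N)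
           (\<lambda>i \<omega>. case_sum (fst \<omega>) (snd \<omega>) i) UNIV"
proof -
  interpret P: prob_space "Pi\<^sub>M UNIV M \<Otimes>\<^sub>M Pi\<^sub>M UNIV N"
    using assms by (intro prob_space_pair prob_space_PiM)
  have probs: "prob_space (case_sum M N i)" for i
    using assms by (cases i) simp_all
  note distr_eq = distr_case_sum_pair_PiM[OF assms]
  have coord: "(\<lambda>\<omega>. case_sum (fst \<omega>) (snd \<omega>) i) \<in> Pi\<^sub>M UNIV M \<Otimes>\<^sub>M Pi\<^sub>M UNIV N \<rightarrow>\<^sub>M case_sum M N i" for i
    by (cases i) simp_all
  have "distr (Pi\<^sub>M UNIV M \<Otimes>\<^sub>M Pi\<^sub>M UNIV N) (case_sum M N i) (\<lambda>\<omega>. case_sum (fst \<omega>) (snd \<omega>) i)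
      = case_sum M N i" for i
  proof -
    have "distr (Pi\<^sub>M UNIV M \<Otimes>\<^sub>M Pi\<^sub>M UNIV N) (case_sum M N i) (\<lambda>\<omega>. case_sum (fst \<omega>) (snd \<omega>) i)
        = distr (Pi\<^sub>M UNIV (case_sum M N)) (case_sum M N i) (\<lambda>z. z i)"
      by (subst distr_eq[symmetric], subst distr_distr) (auto intro!: measurable_case_sum_pair simp: comp_def)
    also have "\<dots> = case_sum M N i"
      using probs by (intro distr_PiM_component) auto
    finally show ?thesis .
  qed
  then show ?thesis
    using distr_eq coord by (subst P.indep_vars_iff_distr_eq_PiM) (simp_all add: restrict_UNIV)
qed

lemma measurable_comp_PiM [measurable]: "(\<lambda>x. x \<circ> f) \<in> Pi\<^sub>M UNIV (\<lambda>_. M) \<rightarrow>\<^sub>M Pi\<^sub>M UNIV (\<lambda>_. M)"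
  by (rule measurable_PiM_single') (auto simp: space_PiM)

lemma distr_comp_PiM:
  assumes "prob_space M" and "inj f"
  shows "distr (Pi\<^sub>M UNIV (\<lambda>_. M)) (Pi\<^sub>M UNIV (\<lambda>_. M)) (\<lambda>x. x \<circ> f) = Pi\<^sub>M UNIV (\<lambda>_. M)"
  using distr_PiM_reindex[of UNIV "\<lambda>_. M" f UNIV] assms by (simp add: comp_def restrict_UNIV)

lemma pmf_pair_measure_SIGMA_sums:
  fixes p :: "nat pmf"
  assumes M: "prob_space M" and S: "\<And>n. S n \<in> sets M"
  shows "(\<lambda>n. pmf p n * measure M (S n)) sums measure (measure_pmf p \<Otimes>\<^sub>M M) (SIGMA n:UNIV. S n)"
proof -
  interpret P: prob_space "measure_pmf p \<Otimes>\<^sub>M M"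
    using M by (intro prob_space_pair prob_space_measure_pmf)
  interpret M: sigma_finite_measure M
    using M by (rule prob_space_imp_sigma_finite)
  have "measure (measure_pmf p \<Otimes>\<^sub>M M) ({n} \<times> S n) = pmf p n * measure M (S n)" for n
    using S by (simp add: measure_def M.emeasure_pair_measure_Times enn2real_mult measure_pmf_single[symmetric])
  moreover have "(SIGMA n:UNIV. S n) = (\<Union>n. {n} \<times> S n)"
    by auto
  moreover have "(\<lambda>n. measure (measure_pmf p \<Otimes>\<^sub>M M) ({n} \<times> S n)) sums measure (measure_pmf p \<Otimes>\<^sub>M M) (\<Union>n. {n} \<times> S n)"
    using S by (intro P.finite_measure_UNION) (auto simp: disjoint_family_on_def)
  ultimately show ?thesis
    by simp
qed

lemma sigma_sets_vimage_tuple: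
  assumes "A \<in> sigma_sets \<Omega> (\<Union>j\<in>C. {X j -` B \<inter> \<Omega> | B. B \<in> sets borel})"
  shows "\<exists>W. A = {\<omega> \<in> \<Omega>. (\<lambda>j\<in>C. X j \<omega>) \<in> W}"
proof -
  define tuple where "tuple \<omega> = (\<lambda>j\<in>C. X j \<omega>)" for \<omega>
  from assms have "\<exists>W. A = {\<omega> \<in> \<Omega>. tuple \<omega> \<in> W}"
  proof (induction rule: sigma_sets.induct)
    case (Basic a)
    then obtain j B where "j \<in> C" "a = X j -` B \<inter> \<Omega>"
      by auto
    then have "a = {\<omega> \<in> \<Omega>. tuple \<omega> \<in> {f. f j \<in> B}}"
      by (auto simp: tuple_def)
    then show ?case ..
  next
    case Empty
    have "{} = {\<omega> \<in> \<Omega>. tuple \<omega> \<in> {}}"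
      by simp
    then show ?case ..
  next
    case (Compl a)
    then obtain W where "a = {\<omega> \<in> \<Omega>. tuple \<omega> \<in> W}"
      by blast
    then have "\<Omega> - a = {\<omega> \<in> \<Omega>. tuple \<omega> \<in> - W}"
      by blast
    then show ?case ..
  next
    case (Union a)
    then obtain W where "\<And>k. a k = {\<omega> \<in> \<Omega>. tuple \<omega> \<in> W k}"
      by metis
    then have "(\<Union>k. a k) = {\<omega> \<in> \<Omega>. tuple \<omega> \<in> (\<Union>k. W k)}"
      by blast
    then show ?case ..
  qed
  then show ?thesis
    by (simp add: tuple_def)
qed

lemma sigma_sets_finite_range_eq_UN_atoms:
  assumes range: "\<And>j \<omega>. j \<in> C \<Longrightarrow> \<omega> \<in> \<Omega> \<Longrightarrow> X j \<omega> \<in> V"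
    and A: "A \<in> sigma_sets \<Omega> (\<Union>j\<in>C. {X j -` B \<inter> \<Omega> | B. B \<in> sets borel})"
  obtains W where "W \<subseteq> C \<rightarrow>\<^sub>E V" and "A = (\<Union>v\<in>W. {\<omega> \<in> \<Omega>. \<forall>j\<in>C. X j \<omega> = v j})"
proof -
  obtain W where W: "A = {\<omega> \<in> \<Omega>. (\<lambda>j\<in>C. X j \<omega>) \<in> W}"
    using sigma_sets_vimage_tuple[OF A] by blast
  have "A = (\<Union>v\<in>W \<inter> (C \<rightarrow>\<^sub>E V). {\<omega> \<in> \<Omega>. \<forall>j\<in>C. X j \<omega> = v j})"
  proof (intro set_eqI iffI)
    fix \<omega> assume "\<omega> \<in> A"
    then show "\<omega> \<in> (\<Union>v\<in>W \<inter> (C \<rightarrow>\<^sub>E V). {\<omega> \<in> \<Omega>. \<forall>j\<in>C. X j \<omega> = v j})"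
      using range by (intro UN_I[of "\<lambda>j\<in>C. X j \<omega>"]) (auto simp: W)
  next
    fix \<omega> assume "\<omega> \<in> (\<Union>v\<in>W \<inter> (C \<rightarrow>\<^sub>E V). {\<omega> \<in> \<Omega>. \<forall>j\<in>C. X j \<omega> = v j})"
    then obtain v where "v \<in> W \<inter> (C \<rightarrow>\<^sub>E V)" "\<omega> \<in> \<Omega>" "\<forall>j\<in>C. X j \<omega> = v j"
      by blast
    moreover from this have "(\<lambda>j\<in>C. X j \<omega>) = v"
      by (auto simp: PiE_iff extensional_def)
    ultimately show "\<omega> \<in> A"
      by (auto simp: W)
  qed
  then show thesis
    by (rule that[rotated]) simp
qed

lemma disjoint_family_on_tuple_atoms:
  assumes "W \<subseteq> C \<rightarrow>\<^sub>E V"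
  shows "disjoint_family_on (\<lambda>v. {\<omega> \<in> \<Omega>. \<forall>j\<in>C. X j \<omega> = v j}) W"
  unfolding disjoint_family_on_def
proof (intro ballI impI)
  fix v w assume "v \<in> W" "w \<in> W" "v \<noteq> w"
  then obtain j where "j \<in> C" "v j \<noteq> w j"
    using assms PiE_ext[of v C "\<lambda>_. V" w] by blast
  then show "{\<omega> \<in> \<Omega>. \<forall>j\<in>C. X j \<omega> = v j} \<inter> {\<omega> \<in> \<Omega>. \<forall>j\<in>C. X j \<omega> = w j} = {}"
    by auto
qed

lemma (in prob_space) indep_sigma_sets_finite_range:
  fixes X :: "'i \<Rightarrow> 'a \<Rightarrow> real"
  assumes C: "finite C" and V: "finite V"
    and X [measurable]: "\<And>j. j \<in> C \<Longrightarrow> X j \<in> borel_measurable M"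
    and range: "\<And>j \<omega>. j \<in> C \<Longrightarrow> \<omega> \<in> space M \<Longrightarrow> X j \<omega> \<in> V"
    and S: "S \<in> events"
    and atoms: "\<And>v. v \<in> C \<rightarrow>\<^sub>E V \<Longrightarrow>
      prob (S \<inter> {\<omega> \<in> space M. \<forall>j\<in>C. X j \<omega> = v j}) = prob S * prob {\<omega> \<in> space M. \<forall>j\<in>C. X j \<omega> = v j}"
    and A: "A \<in> sigma_sets (space M) (\<Union>j\<in>C. {X j -` B \<inter> space M | B. B \<in> sets borel})"
  shows "prob (A \<inter> S) = prob A * prob S"
proof -
  define atom where "atom v = {\<omega> \<in> space M. \<forall>j\<in>C. X j \<omega> = v j}" for v
  obtain W where W: "W \<subseteq> C \<rightarrow>\<^sub>E V" and A_atoms: "A = (\<Union>v\<in>W. atom v)"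
    using sigma_sets_finite_range_eq_UN_atoms[OF range A] unfolding atom_def by blast
  have "finite W"
    using W C V by (blast intro: finite_subset finite_PiE)
  have disjoint: "disjoint_family_on atom W"
    unfolding atom_def using W by (rule disjoint_family_on_tuple_atoms)
  have atom_sets: "atom v \<in> events" for v
    unfolding atom_def using C by measurable
  have "prob (A \<inter> S) = prob (\<Union>v\<in>W. S \<inter> atom v)"
    by (simp add: A_atoms Int_commute)
  also have "\<dots> = (\<Sum>v\<in>W. prob (S \<inter> atom v))"
    using \<open>finite W\<close> disjoint atom_sets S
    by (intro finite_measure_finite_Union) (auto simp: disjoint_family_on_def)
  also have "\<dots> = prob S * (\<Sum>v\<in>W. prob (atom v))"
    unfolding sum_distrib_left using atoms W by (intro sum.cong) (auto simp: atom_def)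
  also have "(\<Sum>v\<in>W. prob (atom v)) = prob A"
    unfolding A_atoms using \<open>finite W\<close> disjoint atom_sets
    by (intro finite_measure_finite_Union[symmetric]) auto
  finally show ?thesis
    by (simp add: mult.commute)
qed

lemma (in prob_space) AE_real_cond_exp_indicator_indep:
  assumes F: "subalgebra M F" and S: "S \<in> events"
    and indep: "\<And>A. A \<in> sets F \<Longrightarrow> prob (A \<inter> S) = prob A * prob S"
  shows "AE \<omega> in M. real_cond_exp M F (indicator S) \<omega> = prob S"
proof -
  interpret finite_measure_subalgebra M F
    using F by unfold_locales
  show ?thesis
  proof (rule real_cond_exp_charact)
    fix A assume A: "A \<in> sets F"
    then have "A \<in> events"
      using F by (auto simp: subalgebra_def)
    then show "(\<integral>\<omega>\<in>A. indicator S \<omega> \<partial>M) = (\<integral>\<omega>\<in>A. prob S \<partial>M)"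
      using S indep[OF A]
      by (simp add: set_lebesgue_integral_def indicator_inter_arith[symmetric] Int_commute)
  qed (use S in \<open>auto intro!: integrable_const_bound[where B = 1]\<close>)
qed

section \<open>Circular distance and segments\<close>

lemma rhoL_commute: "rhoL L a b = rhoL L b a"
  by (simp add: rhoL_def abs_minus_commute)

lemma rhoL_self: "0 \<le> L \<Longrightarrow> rhoL L a a = 0"
  by (simp add: rhoL_def)

lemma rhoL_le_abs: "rhoL L a b \<le> \<bar>a - b\<bar>"
  by (simp add: rhoL_def)

lemma rhoL_triangle:
  assumes "a \<in> {0..L}" "b \<in> {0..L}" "c \<in> {0..L}"
  shows "rhoL L a c \<le> rhoL L a b + rhoL L b c"
  using assms unfolding rhoL_def min_def by (auto simp: abs_if split: if_splits)

lemma rhoL_pos: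
  assumes "a \<in> {0..<L}" "b \<in> {0..<L}" "a \<noteq> b"
  shows "0 < rhoL L a b"
  using assms unfolding rhoL_def min_def by (auto simp: abs_if)

lemma rhoL_centre_le:
  assumes "a \<in> segA m j"
  shows "rhoL L a (centre m j) \<le> 1 / (2 * real m)"
proof -
  have m: "real m > 0"
    using assms by (cases "m = 0") (auto simp: segA_def)
  have "real j - 1 \<le> a * real m" "a * real m < real j"
    using assms m by (auto simp: segA_def field_simps)
  then have "\<bar>a - centre m j\<bar> \<le> 1 / (2 * real m)"
    using m by (simp add: centre_def abs_le_iff field_simps)
  then show ?thesis
    using rhoL_le_abs order_trans by blast
qed

lemma segA_disjoint:
  assumes "j \<noteq> j'"
  shows "segA m j \<inter> segA m j' = {}"
proof (rule ccontr)
  assume "segA m j \<inter> segA m j' \<noteq> {}"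
  then obtain a where a: "a \<in> segA m j" "a \<in> segA m j'" by blast
  then have m: "real m > 0"
    by (cases "m = 0") (auto simp: segA_def)
  have "real j - 1 \<le> a * real m" "a * real m < real j" "real j' - 1 \<le> a * real m" "a * real m < real j'"
    using a m by (auto simp: segA_def field_simps)
  then show False
    using assms by linarith
qed

lemma centre_in_range:
  assumes "j \<in> Gamma m L"
  shows "centre m j \<in> {0..real L}"
proof -
  have "1 \<le> real j" "real j \<le> real m * real L"
    using assms by (auto simp: Gamma_def simp flip: of_nat_mult)
  moreover have "real m > 0"
    using assms by (cases "m = 0") (auto simp: Gamma_def)
  ultimately show ?thesis
    by (simp add: centre_def field_simps)
qed

definition rhoL_separated :: "real \<Rightarrow> real \<Rightarrow> real set \<Rightarrow> real set \<Rightarrow> bool" where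
  "rhoL_separated L T A B \<longleftrightarrow> (\<forall>a \<in> A \<inter> {0..<L}. \<forall>b \<in> B \<inter> {0..<L}. T < rhoL L a b)"

lemma rhoL_separated_disjoint:
  assumes "rhoL_separated L T A B" "0 \<le> T" "a \<in> A" "a \<in> {0..<L}"
  shows "a \<notin> B"
proof
  assume "a \<in> B"
  with assms have "T < rhoL L a a"
    by (auto simp: rhoL_separated_def)
  moreover have "rhoL L a a = 0"
    using assms(4) by (intro rhoL_self) simp
  ultimately show False
    using assms(2) by simp
qed

lemma rhoL_separated_segA_ball_complement:
  assumes "i \<in> Gamma m L"
  shows "rhoL_separated (real L) T (segA m i) (- {y. rhoL (real L) (centre m i) y \<le> T + 1 / (2 * real m)})"
  unfolding rhoL_separated_def
proof (intro ballI)
  fix a b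
  assume a: "a \<in> segA m i \<inter> {0..<real L}"
    and b: "b \<in> - {y. rhoL (real L) (centre m i) y \<le> T + 1 / (2 * real m)} \<inter> {0..<real L}"
  have "rhoL (real L) (centre m i) b \<le> rhoL (real L) (centre m i) a + rhoL (real L) a b"
    using a b centre_in_range[OF assms] by (intro rhoL_triangle) auto
  then show "T < rhoL (real L) a b"
    using rhoL_centre_le[of a m i "real L"] a b by (auto simp: rhoL_commute)
qed

lemma rhoL_separated_far_segA_ball:
  assumes i: "i \<in> Gamma m L" and j: "j \<in> Gamma m L" and T: "1 / real m < T"
    and far: "3 * T < rhoL (real L) (centre m i) (centre m j)"
  shows "rhoL_separated (real L) T (segA m j) {y. rhoL (real L) (centre m i) y \<le> T + 1 / (2 * real m)}"
  unfolding rhoL_separated_def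
proof (intro ballI)
  fix a b
  assume a: "a \<in> segA m j \<inter> {0..<real L}"
    and b: "b \<in> {y. rhoL (real L) (centre m i) y \<le> T + 1 / (2 * real m)} \<inter> {0..<real L}"
  have "rhoL (real L) (centre m i) (centre m j)
      \<le> rhoL (real L) (centre m i) b + rhoL (real L) b (centre m j)"
    using b centre_in_range[OF i] centre_in_range[OF j] by (intro rhoL_triangle) auto
  also have "\<dots> \<le> rhoL (real L) (centre m i) b + (rhoL (real L) b a + rhoL (real L) a (centre m j))"
    using a b centre_in_range[OF j] by (intro add_left_mono rhoL_triangle) auto
  finally show "T < rhoL (real L) a b"
    using far a b T rhoL_centre_le[of a m j "real L"] by (simp add: rhoL_commute[of _ b a])
qed

text \<open>
  The region is the closed ball of radius \<open>T + 1/(2m)\<close> about the centre of \<open>A\<^sub>i\<close>. This fails for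
  \<open>T = 0\<close> (e.g. when \<open>\<tau> L = 1\<close>), but then \<open>A\<^sub>i\<close> itself will do.
\<close>
lemma obtain_separating_region:
  assumes i: "i \<in> Gamma m L" and T: "0 \<le> T" "0 < T \<Longrightarrow> 1 / real m < T"
  obtains R where "R \<in> sets borel" and "segA m i \<subseteq> R"
    and "rhoL_separated (real L) T (segA m i) (- R)"
    and "\<And>j. j \<in> Gamma m L \<Longrightarrow> 3 * T < rhoL (real L) (centre m i) (centre m j) \<Longrightarrow>
           rhoL_separated (real L) T (segA m j) R"
proof (cases "T = 0")
  case True
  show thesis
  proof (rule that[of "segA m i"])
    show "segA m i \<in> sets borel"
      by (simp add: segA_def)
    show "rhoL_separated (real L) T (segA m i) (- segA m i)"
      using True by (auto simp: rhoL_separated_def intro!: rhoL_pos)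
    fix j assume "3 * T < rhoL (real L) (centre m i) (centre m j)"
    then have "j \<noteq> i"
      using True rhoL_self[of "real L"] by auto
    then show "rhoL_separated (real L) T (segA m j) (segA m i)"
      using segA_disjoint[of j i m] True by (auto simp: rhoL_separated_def intro!: rhoL_pos)
  qed simp
next
  case False
  show thesis
  proof (rule that[of "{y. rhoL (real L) (centre m i) y \<le> T + 1 / (2 * real m)}"])
    show "{y. rhoL (real L) (centre m i) y \<le> T + 1 / (2 * real m)} \<in> sets borel"
      unfolding rhoL_def by measurable
    show "segA m i \<subseteq> {y. rhoL (real L) (centre m i) y \<le> T + 1 / (2 * real m)}"
    proof
      fix a assume "a \<in> segA m i"
      then have "rhoL (real L) (centre m i) a \<le> 1 / (2 * real m)"
        using rhoL_centre_le by (simp add: rhoL_commute)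
      then show "a \<in> {y. rhoL (real L) (centre m i) y \<le> T + 1 / (2 * real m)}"
        using T(1) by simp
    qed
  qed (use i T False in \<open>auto intro: rhoL_separated_segA_ball_complement rhoL_separated_far_segA_ball\<close>)
qed

section \<open>Marked point configurations\<close>

type_synonym config = "(nat \<Rightarrow> real) \<times> (nat \<times> nat \<Rightarrow> real)"

definition point_distr :: "nat \<Rightarrow> real measure" where
  "point_distr L = uniform_measure lborel {0..<real L}"

definition mark_distr :: "real measure" where
  "mark_distr = uniform_measure lborel {0..1}"

definition config_measure :: "nat \<Rightarrow> config measure" where
  "config_measure L = Pi\<^sub>M UNIV (\<lambda>_. point_distr L) \<Otimes>\<^sub>M Pi\<^sub>M UNIV (\<lambda>_. mark_distr)"

lemma PPP_space_eq: "PPP_space L = measure_pmf (poisson_pmf (real L)) \<Otimes>\<^sub>M config_measure L"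
  by (simp add: PPP_space_def config_measure_def point_distr_def mark_distr_def)

lemma prob_space_point_distr: "L > 0 \<Longrightarrow> prob_space (point_distr L)"
  unfolding point_distr_def by (intro prob_space_uniform_measure) auto

lemma prob_space_mark_distr: "prob_space mark_distr"
  unfolding mark_distr_def by (intro prob_space_uniform_measure) auto

lemma sets_point_distr [simp, measurable_cong]: "sets (point_distr L) = sets borel"
  by (simp add: point_distr_def)

lemma sets_mark_distr [simp, measurable_cong]: "sets mark_distr = sets borel"
  by (simp add: mark_distr_def)

lemma space_point_distr [simp]: "space (point_distr L) = UNIV"
  by (simp add: point_distr_def)

lemma space_mark_distr [simp]: "space mark_distr = UNIV"
  by (simp add: mark_distr_def)

lemma space_config_measure [simp]: "space (config_measure L) = UNIV"
  by (simp add: config_measure_def space_pair_measure space_PiM point_distr_def mark_distr_def)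

lemma space_PPP_space [simp]: "space (PPP_space L) = UNIV"
  by (simp add: PPP_space_eq space_pair_measure)

lemma prob_space_config_measure: "L > 0 \<Longrightarrow> prob_space (config_measure L)"
  unfolding config_measure_def
  by (intro prob_space_pair prob_space_PiM prob_space_point_distr prob_space_mark_distr)

lemma prob_space_PPP_space: "L > 0 \<Longrightarrow> prob_space (PPP_space L)"
  unfolding PPP_space_eq by (intro prob_space_pair prob_space_config_measure prob_space_measure_pmf)

lemma measurable_config_point [measurable]: "(\<lambda>c. fst c k) \<in> borel_measurable (config_measure L)"
  unfolding config_measure_def by measurable

lemma measurable_config_mark [measurable]: "(\<lambda>c. snd c p) \<in> borel_measurable (config_measure L)"
  unfolding config_measure_def by measurable

lemma measurable_of_coordinates:
  "(\<lambda>z. (\<lambda>k. z (Inl k), \<lambda>p. z (Inr p)))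
     \<in> Pi\<^sub>M A (case_sum (\<lambda>_. point_distr L) (\<lambda>_. mark_distr)) \<rightarrow>\<^sub>M config_measure L"
proof -
  let ?Z = "Pi\<^sub>M A (case_sum (\<lambda>_. point_distr L) (\<lambda>_. mark_distr))"
  have coordinate: "(\<lambda>z. z i) \<in> ?Z \<rightarrow>\<^sub>M borel" for i
  proof (cases "i \<in> A")
    case True
    then have "(\<lambda>z. z i) \<in> ?Z \<rightarrow>\<^sub>M case_sum (\<lambda>_. point_distr L) (\<lambda>_. mark_distr) i"
      by measurable
    then show ?thesis
      by (simp add: measurable_def split: sum.splits)
  next
    case False
    then have "z i = undefined" if "z \<in> space ?Z" for z
      using that by (auto simp: space_PiM PiE_iff extensional_def)
    then show ?thesis
      by (subst measurable_cong[where g = "\<lambda>_. undefined"]) simp_all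
  qed
  have "(\<lambda>z. z i) \<in> ?Z \<rightarrow>\<^sub>M N" if "sets N = sets borel" for i and N :: "real measure"
    using coordinate by (subst measurable_cong_sets[OF refl that])
  then show ?thesis
    unfolding config_measure_def by (intro measurable_Pair measurable_PiM_single') auto
qed

lemma config_indep_disjoint_blocks:
  fixes K K' :: "nat set" and P P' :: "(nat \<times> nat) set"
  assumes L: "L > 0" and disjoint: "K \<inter> K' = {}" "P \<inter> P' = {}"
    and E: "E \<in> sets (config_measure L)" "E' \<in> sets (config_measure L)"
    and local: "\<And>x u x' u'. (\<And>k. k \<in> K \<Longrightarrow> x k = x' k) \<Longrightarrow> (\<And>p. p \<in> P \<Longrightarrow> u p = u' p) \<Longrightarrow>
                   (x, u) \<in> E \<Longrightarrow> (x', u') \<in> E"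
    and local': "\<And>x u x' u'. (\<And>k. k \<in> K' \<Longrightarrow> x k = x' k) \<Longrightarrow> (\<And>p. p \<in> P' \<Longrightarrow> u p = u' p) \<Longrightarrow>
                   (x, u) \<in> E' \<Longrightarrow> (x', u') \<in> E'"
  shows "measure (config_measure L) (E \<inter> E') = measure (config_measure L) E * measure (config_measure L) E'"
proof -
  let ?M = "case_sum (\<lambda>_::nat. point_distr L) (\<lambda>_::nat \<times> nat. mark_distr)"
  let ?block = "\<lambda>B \<omega>. restrict (case_sum (fst \<omega>) (snd \<omega>)) B"
  let ?of = "\<lambda>z. (\<lambda>k. z (Inl k), \<lambda>p. z (Inr p))"
  interpret Q: prob_space "config_measure L"
    using L by (rule prob_space_config_measure)
  have "Q.indep_vars ?M (\<lambda>i \<omega>. case_sum (fst \<omega>) (snd \<omega>) i) UNIV"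
    unfolding config_measure_def
    using indep_vars_case_sum_pair[of "\<lambda>_. point_distr L" "\<lambda>_. mark_distr"] L
    by (simp add: prob_space_point_distr prob_space_mark_distr)
  then have indep: "Q.indep_var (Pi\<^sub>M (K <+> P) ?M) (?block (K <+> P)) (Pi\<^sub>M (K' <+> P') ?M) (?block (K' <+> P'))"
    using disjoint by (intro Q.indep_var_restrict) auto
  have preimage: "?block B -` (?of -` E \<inter> space (Pi\<^sub>M B ?M)) = E"
    if local_B: "\<And>x u x' u'. (\<And>k. Inl k \<in> B \<Longrightarrow> x k = x' k) \<Longrightarrow> (\<And>p. Inr p \<in> B \<Longrightarrow> u p = u' p) \<Longrightarrow>
                 (x, u) \<in> E \<Longrightarrow> (x', u') \<in> E" for B E
  proof -
    have "?of (?block B (x, u)) \<in> E \<longleftrightarrow> (x, u) \<in> E" for x u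
      using local_B[of x "\<lambda>k. ?block B (x, u) (Inl k)" u "\<lambda>p. ?block B (x, u) (Inr p)"]
        local_B[of "\<lambda>k. ?block B (x, u) (Inl k)" x "\<lambda>p. ?block B (x, u) (Inr p)" u]
      by auto
    then show ?thesis
      by (auto simp: space_PiM split: sum.split)
  qed
  define S1 where "S1 = ?of -` E \<inter> space (Pi\<^sub>M (K <+> P) ?M)"
  define S2 where "S2 = ?of -` E' \<inter> space (Pi\<^sub>M (K' <+> P') ?M)"
  have S: "S1 \<in> sets (Pi\<^sub>M (K <+> P) ?M)" "S2 \<in> sets (Pi\<^sub>M (K' <+> P') ?M)"
    unfolding S1_def S2_def using E by (auto intro: measurable_sets[OF measurable_of_coordinates])
  have "?block (K <+> P) -` S1 = E"
    unfolding S1_def using local by (intro preimage) blast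
  moreover have "?block (K' <+> P') -` S2 = E'"
    unfolding S2_def using local' by (intro preimage) blast
  moreover have "(\<lambda>\<omega>. (?block (K <+> P) \<omega>, ?block (K' <+> P') \<omega>)) -` (S1 \<times> S2) = E \<inter> E'"
    using calculation by auto
  ultimately show ?thesis
    using Q.indep_varD[OF indep S] by simp
qed

lemma distr_config_relabel:
  assumes "L > 0" and "inj f" and "inj g"
  shows "distr (config_measure L) (config_measure L) (map_prod (\<lambda>x. x \<circ> f) (\<lambda>u. u \<circ> g)) = config_measure L"
proof -
  have "distr (Pi\<^sub>M UNIV (\<lambda>_. point_distr L)) (Pi\<^sub>M UNIV (\<lambda>_. point_distr L)) (\<lambda>x. x \<circ> f) \<Otimes>\<^sub>M
        distr (Pi\<^sub>M UNIV (\<lambda>_. mark_distr)) (Pi\<^sub>M UNIV (\<lambda>_. mark_distr)) (\<lambda>u. u \<circ> g)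
      = distr (config_measure L) (config_measure L) (map_prod (\<lambda>x. x \<circ> f) (\<lambda>u. u \<circ> g))"
    unfolding config_measure_def map_prod_def using assms
    by (intro pair_measure_distr)
      (auto simp: distr_comp_PiM prob_space_mark_distr
        intro: prob_space_imp_sigma_finite prob_space_PiM prob_space_mark_distr)
  then show ?thesis
    using assms by (simp add: distr_comp_PiM prob_space_point_distr prob_space_mark_distr config_measure_def)
qed

lemma measure_config_relabel:
  assumes "L > 0" and "inj f" and "inj g" and E: "E \<in> sets (config_measure L)"
  shows "measure (config_measure L) (map_prod (\<lambda>x. x \<circ> f) (\<lambda>u. u \<circ> g) -` E) = measure (config_measure L) E"
proof -
  have "(map_prod (\<lambda>x. x \<circ> f) (\<lambda>u. u \<circ> g)) \<in> config_measure L \<rightarrow>\<^sub>M config_measure L"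
    unfolding config_measure_def map_prod_def by measurable
  then have "measure (distr (config_measure L) (config_measure L) (map_prod (\<lambda>x. x \<circ> f) (\<lambda>u. u \<circ> g))) E
      = measure (config_measure L) (map_prod (\<lambda>x. x \<circ> f) (\<lambda>u. u \<circ> g) -` E)"
    using E by (subst measure_distr) auto
  then show ?thesis
    using distr_config_relabel[OF assms(1-3)] by simp
qed

definition valid_config :: "nat \<Rightarrow> (nat \<Rightarrow> real) \<Rightarrow> (nat \<times> nat \<Rightarrow> real) \<Rightarrow> bool" where
  "valid_config L x u \<longleftrightarrow> (\<forall>k. x k \<in> {0..<real L}) \<and> (\<forall>p. u p \<in> {0..1})"

lemma AE_valid_config:
  assumes L: "L > 0"
  shows "AE c in config_measure L. valid_config L (fst c) (snd c)"
proof -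
  interpret pair_sigma_finite "Pi\<^sub>M UNIV (\<lambda>_::nat. point_distr L)" "Pi\<^sub>M UNIV (\<lambda>_::nat \<times> nat. mark_distr)"
    using L by (intro pair_sigma_finite.intro prob_space_imp_sigma_finite prob_space_PiM
        prob_space_point_distr prob_space_mark_distr)
  have "AE y in point_distr L. y \<in> {0..<real L}" "AE y in mark_distr. y \<in> {0..1}"
    unfolding point_distr_def mark_distr_def using L by (subst AE_uniform_measure; simp)+
  then have "AE x in Pi\<^sub>M UNIV (\<lambda>_::nat. point_distr L). \<forall>k. x k \<in> {0..<real L}"
    and "AE u in Pi\<^sub>M UNIV (\<lambda>_::nat \<times> nat. mark_distr). \<forall>p. u p \<in> {0..1}"
    using L prob_space_point_distr prob_space_mark_distr
    by (auto simp: AE_all_countable simp del: atLeastLessThan_iff atLeastAtMost_iff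
        intro!: AE_PiM_component)
  moreover have "{c \<in> space (config_measure L). valid_config L (fst c) (snd c)} \<in> sets (config_measure L)"
    unfolding valid_config_def by measurable
  ultimately show ?thesis
    unfolding config_measure_def
    by (subst AE_pair_measure) (auto simp: valid_config_def elim!: AE_mp)
qed

definition pair_perm :: "(nat \<Rightarrow> nat) \<Rightarrow> nat \<times> nat \<Rightarrow> nat \<times> nat" where
  "pair_perm \<pi> = (\<lambda>(a, b). if (a < b) = (\<pi> a < \<pi> b) then (\<pi> a, \<pi> b) else (\<pi> b, \<pi> a))"

lemma pair_perm_min_max: "pair_perm \<pi> (min k l, max k l) = (min (\<pi> k) (\<pi> l), max (\<pi> k) (\<pi> l))"
  by (auto simp: pair_perm_def min_def max_def)

lemma inj_pair_perm:
  assumes "inj \<pi>"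
  shows "inj (pair_perm \<pi>)"
proof (rule injI, clarify)
  fix a b c d assume "pair_perm \<pi> (a, b) = pair_perm \<pi> (c, d)"
  then show "a = c \<and> b = d"
    using assms by (auto simp: pair_perm_def inj_eq split: if_splits)
qed

definition shift_config :: "nat \<Rightarrow> config \<Rightarrow> config" where
  "shift_config r = map_prod (\<lambda>x. x \<circ> (\<lambda>k. k + r)) (\<lambda>u. u \<circ> map_prod (\<lambda>k. k + r) (\<lambda>k. k + r))"

lemma measurable_shift_config [measurable]: "shift_config r \<in> config_measure L \<rightarrow>\<^sub>M config_measure L"
  unfolding shift_config_def config_measure_def map_prod_def by measurable

definition PPP_event :: "(nat \<Rightarrow> (nat \<Rightarrow> real) \<Rightarrow> (nat \<times> nat \<Rightarrow> real) \<Rightarrow> bool) \<Rightarrow> omega set" where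
  "PPP_event P = {\<omega>. P (Npts \<omega>) (Xpt \<omega>) (Umark \<omega>)}"

lemma PPP_event_sums:
  assumes L: "L > 0" and P: "\<And>n. {c. P n (fst c) (snd c)} \<in> sets (config_measure L)"
  shows "PPP_event P \<in> sets (PPP_space L)"
    and "(\<lambda>n. real L ^ n / fact n * exp (- real L) * measure (config_measure L) {c. P n (fst c) (snd c)})
           sums measure (PPP_space L) (PPP_event P)"
proof -
  have SIGMA: "PPP_event P = (SIGMA n:UNIV. {c. P n (fst c) (snd c)})"
    by (auto simp: PPP_event_def Npts_def Xpt_def Umark_def)
  show "PPP_event P \<in> sets (PPP_space L)"
  proof -
    have "(SIGMA n:UNIV. {c. P n (fst c) (snd c)}) = (\<Union>n. {n} \<times> {c. P n (fst c) (snd c)})"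
      by auto
    then show ?thesis
      unfolding SIGMA PPP_space_eq using P by (auto intro!: sets.countable_UN pair_measureI)
  qed
  show "(\<lambda>n. real L ^ n / fact n * exp (- real L) * measure (config_measure L) {c. P n (fst c) (snd c)})
      sums measure (PPP_space L) (PPP_event P)"
    unfolding SIGMA PPP_space_eq
    using pmf_pair_measure_SIGMA_sums[OF prob_space_config_measure[OF L] P, of "poisson_pmf (real L)"] L
    by (simp add: pmf_poisson)
qed

section \<open>Spatial independence of the Poisson process\<close>

text \<open>
  \<open>\<Phi> n x u\<close> and \<open>\<Psi> n x u\<close> are events of a configuration of \<open>n\<close> marked points. \<open>\<Phi>\<close> only sees
  the points in \<open>R\<close> and \<open>\<Psi>\<close> only those outside \<open>R\<close>, in the sense that when the points in \<open>R\<close>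
  are exactly the first \<open>r\<close> ones, \<open>\<Phi>\<close> can forget the others and \<open>\<Psi>\<close> can drop the first \<open>r\<close>.
\<close>
locale poisson_split =
  fixes L :: nat and R :: "real set"
    and \<Phi> \<Psi> :: "nat \<Rightarrow> (nat \<Rightarrow> real) \<Rightarrow> (nat \<times> nat \<Rightarrow> real) \<Rightarrow> bool"
  assumes L_pos: "L > 0"
    and R_borel [measurable]: "R \<in> sets borel"
    and \<Phi>_measurable: "\<And>n. {c. \<Phi> n (fst c) (snd c)} \<in> sets (config_measure L)"
    and \<Psi>_measurable: "\<And>n. {c. \<Psi> n (fst c) (snd c)} \<in> sets (config_measure L)"
    and \<Phi>_cong: "\<And>n x x' u u'. (\<And>k. k < n \<Longrightarrow> x k = x' k) \<Longrightarrow>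
                   (\<And>a b. a < n \<Longrightarrow> b < n \<Longrightarrow> u (a, b) = u' (a, b)) \<Longrightarrow> \<Phi> n x u = \<Phi> n x' u'"
    and \<Psi>_cong: "\<And>n x x' u u'. (\<And>k. k < n \<Longrightarrow> x k = x' k) \<Longrightarrow>
                   (\<And>a b. a < n \<Longrightarrow> b < n \<Longrightarrow> u (a, b) = u' (a, b)) \<Longrightarrow> \<Psi> n x u = \<Psi> n x' u'"
    and \<Phi>_permute: "\<And>n \<pi> x u. \<pi> permutes {..<n} \<Longrightarrow> \<Phi> n (x \<circ> \<pi>) (u \<circ> pair_perm \<pi>) = \<Phi> n x u"
    and \<Psi>_permute: "\<And>n \<pi> x u. \<pi> permutes {..<n} \<Longrightarrow> \<Psi> n (x \<circ> \<pi>) (u \<circ> pair_perm \<pi>) = \<Psi> n x u"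
    and \<Phi>_inside: "\<And>n r x u. valid_config L x u \<Longrightarrow> r \<le> n \<Longrightarrow> (\<And>k. k < n \<Longrightarrow> x k \<in> R \<longleftrightarrow> k < r) \<Longrightarrow>
                     \<Phi> n x u = \<Phi> r x u"
    and \<Psi>_outside: "\<And>n r x u. valid_config L x u \<Longrightarrow> r \<le> n \<Longrightarrow> (\<And>k. k < n \<Longrightarrow> x k \<in> R \<longleftrightarrow> k < r) \<Longrightarrow>
                     \<Psi> n x u = \<Psi> (n - r) (fst (shift_config r (x, u))) (snd (shift_config r (x, u)))"
begin

abbreviation Q :: "config measure" where
  "Q \<equiv> config_measure L"

definition inside_pattern :: "nat \<Rightarrow> nat set \<Rightarrow> config set" where
  "inside_pattern n s = {c. \<forall>k<n. fst c k \<in> R \<longleftrightarrow> k \<in> s}"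

definition joint :: "nat \<Rightarrow> config set" where
  "joint n = {c. \<Phi> n (fst c) (snd c) \<and> \<Psi> n (fst c) (snd c)}"

definition inside_event :: "nat \<Rightarrow> config set" where
  "inside_event r = {c. (\<forall>k<r. fst c k \<in> R) \<and> \<Phi> r (fst c) (snd c)}"

definition outside_event :: "nat \<Rightarrow> config set" where
  "outside_event q = {c. (\<forall>k<q. fst c k \<notin> R) \<and> \<Psi> q (fst c) (snd c)}"

lemma sets_inside_pattern [measurable]: "inside_pattern n s \<in> sets Q"
proof -
  have "inside_pattern n s = {c \<in> space Q. \<forall>k<n. fst c k \<in> R \<longleftrightarrow> k \<in> s}"
    by (simp add: inside_pattern_def)
  also have "\<dots> \<in> sets Q"
    by measurable
  finally show ?thesis .
qed

lemma sets_joint [measurable]: "joint n \<in> sets Q"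
  using \<Phi>_measurable[of n] \<Psi>_measurable[of n]
  by (simp add: joint_def Collect_conj_eq sets.Int)

lemma sets_inside_event [measurable]: "inside_event r \<in> sets Q"
proof -
  have "inside_event r = {c \<in> space Q. \<forall>k<r. fst c k \<in> R} \<inter> {c. \<Phi> r (fst c) (snd c)}"
    by (auto simp: inside_event_def)
  also have "\<dots> \<in> sets Q"
    using \<Phi>_measurable by (intro sets.Int) measurable
  finally show ?thesis .
qed

lemma sets_outside_event [measurable]: "outside_event q \<in> sets Q"
proof -
  have "outside_event q = {c \<in> space Q. \<forall>k<q. fst c k \<notin> R} \<inter> {c. \<Psi> q (fst c) (snd c)}"
    by (auto simp: outside_event_def)
  also have "\<dots> \<in> sets Q"
    using \<Psi>_measurable by (intro sets.Int) measurable
  finally show ?thesis .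
qed

lemma measure_joint_inside_pattern:
  assumes s: "s \<subseteq> {..<n}"
  shows "measure Q (joint n \<inter> inside_pattern n s) = measure Q (joint n \<inter> inside_pattern n {..<card s})"
proof -
  obtain \<pi> where \<pi>: "\<pi> permutes {..<n}" "\<pi> ` {..<card s} = s"
    using obtain_permutes_onto_prefix[OF s] .
  have prefix: "\<pi> k \<in> s \<longleftrightarrow> k < card s" for k
    using inj_image_mem_iff[OF permutes_inj[OF \<pi>(1)], of k "{..<card s}"] \<pi>(2) by simp
  note reindex = permutes_all_lessThan_iff[OF \<pi>(1)]
  have "map_prod (\<lambda>x. x \<circ> \<pi>) (\<lambda>u. u \<circ> pair_perm \<pi>) -` (joint n \<inter> inside_pattern n {..<card s})
      = joint n \<inter> inside_pattern n s"
  proof (intro set_eqI)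
    fix c :: config
    obtain x u where c: "c = (x, u)"
      by fastforce
    have "(\<forall>k<n. x (\<pi> k) \<in> R \<longleftrightarrow> k < card s) \<longleftrightarrow> (\<forall>j<n. x j \<in> R \<longleftrightarrow> j \<in> s)"
      using reindex[of "\<lambda>j. x j \<in> R \<longleftrightarrow> j \<in> s"] by (simp add: prefix)
    then show "c \<in> map_prod (\<lambda>x. x \<circ> \<pi>) (\<lambda>u. u \<circ> pair_perm \<pi>) -` (joint n \<inter> inside_pattern n {..<card s})
        \<longleftrightarrow> c \<in> joint n \<inter> inside_pattern n s"
      by (simp add: c joint_def inside_pattern_def \<Phi>_permute[OF \<pi>(1)] \<Psi>_permute[OF \<pi>(1)])
  qed
  moreover have "joint n \<inter> inside_pattern n {..<card s} \<in> sets Q"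
    by measurable
  ultimately show ?thesis
    using measure_config_relabel[OF L_pos permutes_inj[OF \<pi>(1)] inj_pair_perm[OF permutes_inj[OF \<pi>(1)]]]
    by metis
qed

lemma joint_prefix_iff:
  assumes valid: "valid_config L x u" and rn: "r \<le> n"
  shows "(x, u) \<in> joint n \<inter> inside_pattern n {..<r} \<longleftrightarrow>
           (x, u) \<in> inside_event r \<inter> shift_config r -` outside_event (n - r)"
proof -
  have "(\<forall>k<n. x k \<in> R \<longleftrightarrow> k < r) \<longleftrightarrow> (\<forall>k<r. x k \<in> R) \<and> (\<forall>k<n - r. x (k + r) \<notin> R)"
  proof
    assume "\<forall>k<n. x k \<in> R \<longleftrightarrow> k < r"
    then show "(\<forall>k<r. x k \<in> R) \<and> (\<forall>k<n - r. x (k + r) \<notin> R)"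
      using rn by auto
  next
    assume split: "(\<forall>k<r. x k \<in> R) \<and> (\<forall>k<n - r. x (k + r) \<notin> R)"
    show "\<forall>k<n. x k \<in> R \<longleftrightarrow> k < r"
    proof (intro allI impI)
      fix k assume "k < n"
      show "x k \<in> R \<longleftrightarrow> k < r"
      proof (cases "k < r")
        case False
        then have "k - r < n - r" "k - r + r = k"
          using \<open>k < n\<close> by auto
        then show ?thesis
          using split False by metis
      qed (use split in auto)
    qed
  qed
  then show ?thesis
    using \<Phi>_inside[OF valid rn] \<Psi>_outside[OF valid rn]
    by (auto simp: joint_def inside_pattern_def inside_event_def outside_event_def shift_config_def)
qed

lemma measure_inside_outside:
  "measure Q (inside_event r \<inter> shift_config r -` outside_event q)
     = measure Q (inside_event r) * measure Q (outside_event q)"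
proof -
  have "measure Q (inside_event r \<inter> shift_config r -` outside_event q)
      = measure Q (inside_event r) * measure Q (shift_config r -` outside_event q)"
  proof (rule config_indep_disjoint_blocks[OF L_pos,
        where K = "{..<r}" and P = "{..<r} \<times> {..<r}" and K' = "{r..<r + q}" and P' = "{r..<r + q} \<times> {r..<r + q}"])
    show "inside_event r \<in> sets Q"
      by measurable
    show "shift_config r -` outside_event q \<in> sets Q"
      using measurable_sets[OF measurable_shift_config sets_outside_event] by simp
    fix x x' :: "nat \<Rightarrow> real" and u u' :: "nat \<times> nat \<Rightarrow> real"
    assume "\<And>k. k \<in> {..<r} \<Longrightarrow> x k = x' k" "\<And>p. p \<in> {..<r} \<times> {..<r} \<Longrightarrow> u p = u' p"
    then show "(x, u) \<in> inside_event r \<Longrightarrow> (x', u') \<in> inside_event r"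
      using \<Phi>_cong[of r x x' u u'] by (auto simp: inside_event_def)
  next
    fix x x' :: "nat \<Rightarrow> real" and u u' :: "nat \<times> nat \<Rightarrow> real"
    assume "\<And>k. k \<in> {r..<r + q} \<Longrightarrow> x k = x' k" "\<And>p. p \<in> {r..<r + q} \<times> {r..<r + q} \<Longrightarrow> u p = u' p"
    then show "(x, u) \<in> shift_config r -` outside_event q \<Longrightarrow> (x', u') \<in> shift_config r -` outside_event q"
      using \<Psi>_cong[of q "x \<circ> (\<lambda>k. k + r)" "x' \<circ> (\<lambda>k. k + r)"
          "u \<circ> map_prod (\<lambda>k. k + r) (\<lambda>k. k + r)" "u' \<circ> map_prod (\<lambda>k. k + r) (\<lambda>k. k + r)"]
      by (auto simp: outside_event_def shift_config_def)
  qed auto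
  moreover have "measure Q (shift_config r -` outside_event q) = measure Q (outside_event q)"
    unfolding shift_config_def
    by (intro measure_config_relabel L_pos sets_outside_event) (auto simp: inj_def)
  ultimately show ?thesis
    by simp
qed

lemma measure_joint_prefix:
  assumes "r \<le> n"
  shows "measure Q (joint n \<inter> inside_pattern n {..<r}) = measure Q (inside_event r) * measure Q (outside_event (n - r))"
proof -
  have "c \<in> joint n \<inter> inside_pattern n {..<r} \<longleftrightarrow> c \<in> inside_event r \<inter> shift_config r -` outside_event (n - r)"
    if "valid_config L (fst c) (snd c)" for c
    using joint_prefix_iff[OF that assms] by simp
  then have "AE c in Q. c \<in> joint n \<inter> inside_pattern n {..<r} \<longleftrightarrow> c \<in> inside_event r \<inter> shift_config r -` outside_event (n - r)"
    by (rule eventually_mono[OF AE_valid_config[OF L_pos]])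
  then have "measure Q (joint n \<inter> inside_pattern n {..<r}) = measure Q (inside_event r \<inter> shift_config r -` outside_event (n - r))"
    using measurable_sets[OF measurable_shift_config sets_outside_event] by (intro measure_eq_AE) auto
  then show ?thesis
    by (simp add: measure_inside_outside)
qed

lemma measure_joint:
  "measure Q (joint n) = (\<Sum>r\<le>n. real (n choose r) * (measure Q (inside_event r) * measure Q (outside_event (n - r))))"
proof -
  interpret Q: prob_space Q
    using L_pos by (rule prob_space_config_measure)
  have "joint n = (\<Union>s\<in>Pow {..<n}. joint n \<inter> inside_pattern n s)" (is "_ = ?decomposition")
  proof (intro equalityI subsetI)
    fix c assume "c \<in> joint n"
    then show "c \<in> (\<Union>s\<in>Pow {..<n}. joint n \<inter> inside_pattern n s)"
      by (intro UN_I[of "{k. k < n \<and> fst c k \<in> R}"]) (auto simp: inside_pattern_def)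
  qed auto
  then have "measure Q (joint n) = measure Q ?decomposition"
    by (rule arg_cong)
  also have "\<dots> = (\<Sum>s\<in>Pow {..<n}. measure Q (joint n \<inter> inside_pattern n s))"
    by (rule Q.finite_measure_finite_Union) (auto simp: disjoint_family_on_def inside_pattern_def)
  also have "\<dots> = (\<Sum>s\<in>Pow {..<n}. measure Q (inside_event (card s)) * measure Q (outside_event (n - card s)))"
  proof (intro sum.cong refl)
    fix s assume s: "s \<in> Pow {..<n}"
    then have "measure Q (joint n \<inter> inside_pattern n s) = measure Q (joint n \<inter> inside_pattern n {..<card s})"
      by (intro measure_joint_inside_pattern) simp
    also have "\<dots> = measure Q (inside_event (card s)) * measure Q (outside_event (n - card s))"
      using s card_mono[of "{..<n}" s] by (intro measure_joint_prefix) simp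
    finally show "measure Q (joint n \<inter> inside_pattern n s)
        = measure Q (inside_event (card s)) * measure Q (outside_event (n - card s))" .
  qed
  also have "\<dots> = (\<Sum>r\<le>n. real (n choose r) * (measure Q (inside_event r) * measure Q (outside_event (n - r))))"
    using sum_Pow_card[of "{..<n}" "\<lambda>r. measure Q (inside_event r) * measure Q (outside_event (n - r))"]
    by simp
  finally show ?thesis .
qed

lemma measure_PPP_joint:
  "measure (PPP_space L) (PPP_event (\<lambda>n x u. \<Phi> n x u \<and> \<Psi> n x u))
     = exp (- real L) * ((\<Sum>r. real L ^ r / fact r * measure Q (inside_event r)) *
                         (\<Sum>q. real L ^ q / fact q * measure Q (outside_event q)))"
proof -
  interpret Q: prob_space Q
    using L_pos by (rule prob_space_config_measure)
  have PPP: "(\<lambda>n. real L ^ n / fact n * exp (- real L) * measure Q (joint n))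
      sums measure (PPP_space L) (PPP_event (\<lambda>n x u. \<Phi> n x u \<and> \<Psi> n x u))"
    using PPP_event_sums(2)[OF L_pos sets_joint[unfolded joint_def]] by (simp add: joint_def)
  have "(\<lambda>n. real L ^ n / fact n * (\<Sum>r\<le>n. real (n choose r) *
        (measure Q (inside_event r) * measure Q (outside_event (n - r)))))
      sums ((\<Sum>r. real L ^ r / fact r * measure Q (inside_event r)) *
            (\<Sum>q. real L ^ q / fact q * measure Q (outside_event q)))"
    by (rule sums_exp_binomial_convolution[where A = 1 and B = 1]) simp_all
  from sums_mult[OF this, of "exp (- real L)"]
  have "(\<lambda>n. real L ^ n / fact n * exp (- real L) * measure Q (joint n))
      sums (exp (- real L) * ((\<Sum>r. real L ^ r / fact r * measure Q (inside_event r)) *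
                              (\<Sum>q. real L ^ q / fact q * measure Q (outside_event q))))"
    by (simp add: measure_joint ac_simps)
  with PPP show ?thesis
    by (rule sums_unique2)
qed

lemma PPP_indep:
  "measure (PPP_space L) (PPP_event (\<lambda>n x u. \<Phi> n x u \<and> \<Psi> n x u))
     = measure (PPP_space L) (PPP_event \<Phi>) * measure (PPP_space L) (PPP_event \<Psi>)"
proof -
  \<comment> \<open>\<open>measure_PPP_joint\<close> for the pairs (\<open>\<Phi>\<close>, \<open>\<Psi>\<close>), (\<open>\<Phi>\<close>, True), (True, \<open>\<Psi>\<close>), (True, True) gives
      products of the same four series, and the last probability is 1.\<close>
  have top: "{c. True} \<in> sets Q"
    using sets.top[of Q] by simp
  interpret only_\<Phi>: poisson_split L R \<Phi> "\<lambda>_ _ _. True"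
    by unfold_locales (fact L_pos R_borel \<Phi>_measurable \<Phi>_cong \<Phi>_permute \<Phi>_inside top | simp)+
  interpret only_\<Psi>: poisson_split L R "\<lambda>_ _ _. True" \<Psi>
    by unfold_locales (fact L_pos R_borel \<Psi>_measurable \<Psi>_cong \<Psi>_permute \<Psi>_outside top | simp)+
  interpret neither: poisson_split L R "\<lambda>_ _ _. True" "\<lambda>_ _ _. True"
    by unfold_locales (fact L_pos R_borel top | simp)+
  interpret PPP: prob_space "PPP_space L"
    using L_pos by (rule prob_space_PPP_space)
  define A where "A = (\<Sum>r. real L ^ r / fact r * measure Q (inside_event r))"
  define B where "B = (\<Sum>q. real L ^ q / fact q * measure Q (outside_event q))"
  define A0 where "A0 = (\<Sum>r. real L ^ r / fact r * measure Q (neither.inside_event r))"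
  define B0 where "B0 = (\<Sum>q. real L ^ q / fact q * measure Q (neither.outside_event q))"
  have "measure (PPP_space L) (PPP_event \<Phi>) = exp (- real L) * (A * B0)"
    using only_\<Phi>.measure_PPP_joint
    by (simp add: A_def B0_def inside_event_def only_\<Phi>.inside_event_def
        only_\<Phi>.outside_event_def neither.outside_event_def)
  moreover have "measure (PPP_space L) (PPP_event \<Psi>) = exp (- real L) * (A0 * B)"
    using only_\<Psi>.measure_PPP_joint
    by (simp add: A0_def B_def outside_event_def only_\<Psi>.outside_event_def
        only_\<Psi>.inside_event_def neither.inside_event_def)
  moreover have "1 = exp (- real L) * (A0 * B0)"
    using neither.measure_PPP_joint PPP.prob_space by (simp add: A0_def B0_def PPP_event_def)
  moreover have "measure (PPP_space L) (PPP_event (\<lambda>n x u. \<Phi> n x u \<and> \<Psi> n x u)) = exp (- real L) * (A * B)"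
    using measure_PPP_joint by (simp add: A_def B_def)
  ultimately show ?thesis
    by (metis mult.assoc mult.left_commute mult_1)
qed

end

section \<open>Isolated nodes in segments\<close>

abbreviation edge_range :: "(real \<Rightarrow> real) \<Rightarrow> real \<Rightarrow> real \<Rightarrow> nat \<Rightarrow> real" where
  "edge_range H \<tau> \<alpha> L \<equiv> RL H \<tau> L powr (1 + 1 / \<alpha>)"

definition config_edge ::
    "(real \<Rightarrow> real) \<Rightarrow> real \<Rightarrow> real \<Rightarrow> nat \<Rightarrow> (nat \<Rightarrow> real) \<Rightarrow> (nat \<times> nat \<Rightarrow> real) \<Rightarrow> nat \<Rightarrow> nat \<Rightarrow> bool"
  where "config_edge H \<tau> \<alpha> L x u k l \<longleftrightarrow> k \<noteq> l \<and> u (min k l, max k l) < htil H \<tau> \<alpha> L (x k) (x l)"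

definition isolated_singleton ::
    "(real \<Rightarrow> real) \<Rightarrow> real \<Rightarrow> real \<Rightarrow> nat \<Rightarrow> real set \<Rightarrow> nat \<Rightarrow> (nat \<Rightarrow> real) \<Rightarrow> (nat \<times> nat \<Rightarrow> real) \<Rightarrow> bool"
  where "isolated_singleton H \<tau> \<alpha> L S n x u \<longleftrightarrow>
           card {k. k < n \<and> x k \<in> S} = 1 \<and> (\<forall>k<n. x k \<in> S \<longrightarrow> (\<forall>l<n. \<not> config_edge H \<tau> \<alpha> L x u k l))"

lemma Iind_eq_indicator:
  "Iind H \<tau> \<alpha> L m i = indicator (PPP_event (isolated_singleton H \<tau> \<alpha> L (segA m i)))"
  by (auto simp: fun_eq_iff Iind_def indicator_def PPP_event_def isolated_singleton_def config_edge_def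
      edge_def Npts_def Xpt_def Umark_def)

lemma no_config_edge_beyond_range:
  assumes "0 \<le> u (min k l, max k l)" and "edge_range H \<tau> \<alpha> L < rhoL (real L) (x k) (x l)"
  shows "\<not> config_edge H \<tau> \<alpha> L x u k l"
  using assms by (simp add: config_edge_def htil_def)

lemma isolated_singleton_cong:
  assumes "\<And>k. k < n \<Longrightarrow> x k = x' k" and "\<And>a b. a < n \<Longrightarrow> b < n \<Longrightarrow> u (a, b) = u' (a, b)"
  shows "isolated_singleton H \<tau> \<alpha> L S n x u = isolated_singleton H \<tau> \<alpha> L S n x' u'"
proof -
  have "{k. k < n \<and> x k \<in> S} = {k. k < n \<and> x' k \<in> S}"
    using assms(1) by auto
  moreover have "config_edge H \<tau> \<alpha> L x u k l = config_edge H \<tau> \<alpha> L x' u' k l" if "k < n" "l < n" for k l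
    using that assms by (simp add: config_edge_def min_def max_def)
  ultimately show ?thesis
    unfolding isolated_singleton_def using assms(1) by auto
qed

lemma isolated_singleton_permute:
  assumes \<pi>: "\<pi> permutes {..<n}"
  shows "isolated_singleton H \<tau> \<alpha> L S n (x \<circ> \<pi>) (u \<circ> pair_perm \<pi>) = isolated_singleton H \<tau> \<alpha> L S n x u"
proof -
  note reindex = permutes_all_lessThan_iff[OF \<pi>]
  have "\<pi> ` {k. k < n \<and> x (\<pi> k) \<in> S} = {j. j < n \<and> x j \<in> S}"
    using permutes_image[OF \<pi>] by (auto simp: image_iff)
  moreover have "card (\<pi> ` {k. k < n \<and> x (\<pi> k) \<in> S}) = card {k. k < n \<and> x (\<pi> k) \<in> S}"
    using permutes_inj[OF \<pi>] by (intro card_image) (simp add: inj_on_def inj_def)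
  ultimately have card: "card {k. k < n \<and> (x \<circ> \<pi>) k \<in> S} = card {j. j < n \<and> x j \<in> S}"
    by simp
  have edge: "config_edge H \<tau> \<alpha> L (x \<circ> \<pi>) (u \<circ> pair_perm \<pi>) k l = config_edge H \<tau> \<alpha> L x u (\<pi> k) (\<pi> l)" for k l
    using permutes_inj[OF \<pi>] by (auto simp: config_edge_def pair_perm_min_max inj_eq)
  have "(\<forall>l<n. \<not> config_edge H \<tau> \<alpha> L x u j (\<pi> l)) \<longleftrightarrow> (\<forall>l<n. \<not> config_edge H \<tau> \<alpha> L x u j l)" for j
    using reindex[of "\<lambda>l. \<not> config_edge H \<tau> \<alpha> L x u j l"] .
  then have "(\<forall>k<n. x (\<pi> k) \<in> S \<longrightarrow> (\<forall>l<n. \<not> config_edge H \<tau> \<alpha> L (x \<circ> \<pi>) (u \<circ> pair_perm \<pi>) k l))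
      \<longleftrightarrow> (\<forall>k<n. x (\<pi> k) \<in> S \<longrightarrow> (\<forall>l<n. \<not> config_edge H \<tau> \<alpha> L x u (\<pi> k) l))"
    by (simp add: edge)
  also have "\<dots> \<longleftrightarrow> (\<forall>k<n. x k \<in> S \<longrightarrow> (\<forall>l<n. \<not> config_edge H \<tau> \<alpha> L x u k l))"
    using reindex[of "\<lambda>k. x k \<in> S \<longrightarrow> (\<forall>l<n. \<not> config_edge H \<tau> \<alpha> L x u k l)"] .
  finally show ?thesis
    unfolding isolated_singleton_def card by simp
qed

lemma isolated_singleton_inside:
  assumes SR: "S \<subseteq> R" and sep: "rhoL_separated (real L) (edge_range H \<tau> \<alpha> L) S (- R)"
    and valid: "valid_config L x u" and rn: "r \<le> n" and first: "\<And>k. k < n \<Longrightarrow> x k \<in> R \<longleftrightarrow> k < r"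
  shows "isolated_singleton H \<tau> \<alpha> L S n x u = isolated_singleton H \<tau> \<alpha> L S r x u"
proof -
  have in_S: "k < r" if "k < n" "x k \<in> S" for k
    using first that SR by auto
  have no_edge: "\<not> config_edge H \<tau> \<alpha> L x u k l" if "k < n" "x k \<in> S" "r \<le> l" "l < n" for k l
  proof (rule no_config_edge_beyond_range)
    show "0 \<le> u (min k l, max k l)"
      using valid by (simp add: valid_config_def)
    have "x l \<notin> R"
      using first[of l] that by auto
    then show "edge_range H \<tau> \<alpha> L < rhoL (real L) (x k) (x l)"
      using sep valid that by (auto simp: rhoL_separated_def valid_config_def)
  qed
  have "{k. k < n \<and> x k \<in> S} = {k. k < r \<and> x k \<in> S}"
    using in_S rn by auto
  moreover have "(\<forall>k<n. x k \<in> S \<longrightarrow> (\<forall>l<n. \<not> config_edge H \<tau> \<alpha> L x u k l))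
      \<longleftrightarrow> (\<forall>k<r. x k \<in> S \<longrightarrow> (\<forall>l<r. \<not> config_edge H \<tau> \<alpha> L x u k l))"
    using in_S no_edge rn by (meson less_le_trans not_less)
  ultimately show ?thesis
    unfolding isolated_singleton_def by simp
qed

lemma isolated_singleton_outside:
  assumes sep: "rhoL_separated (real L) (edge_range H \<tau> \<alpha> L) S R"
    and valid: "valid_config L x u" and rn: "r \<le> n" and first: "\<And>k. k < n \<Longrightarrow> x k \<in> R \<longleftrightarrow> k < r"
  shows "isolated_singleton H \<tau> \<alpha> L S n x u
           = isolated_singleton H \<tau> \<alpha> L S (n - r) (fst (shift_config r (x, u))) (snd (shift_config r (x, u)))"
proof -
  have in_S: "r \<le> k" if "k < n" "x k \<in> S" for k
    using rhoL_separated_disjoint[OF sep powr_ge_zero that(2)] first[OF that(1)] valid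
    by (force simp: valid_config_def)
  have no_edge: "\<not> config_edge H \<tau> \<alpha> L x u k l" if "k < n" "x k \<in> S" "l < r" for k l
  proof (rule no_config_edge_beyond_range)
    show "0 \<le> u (min k l, max k l)"
      using valid by (simp add: valid_config_def)
    have "x l \<in> R"
      using first[of l] that rn by auto
    then show "edge_range H \<tau> \<alpha> L < rhoL (real L) (x k) (x l)"
      using sep valid that by (auto simp: rhoL_separated_def valid_config_def)
  qed
  have edge: "config_edge H \<tau> \<alpha> L (x \<circ> (\<lambda>k. k + r)) (u \<circ> map_prod (\<lambda>k. k + r) (\<lambda>k. k + r)) k l
      = config_edge H \<tau> \<alpha> L x u (k + r) (l + r)" for k l
    by (simp add: config_edge_def min_def max_def)
  show ?thesis
    using card_Collect_less_shift[of n "\<lambda>k. x k \<in> S", OF in_S]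
      all_less_shift_iff[of n "\<lambda>k. x k \<in> S" r "\<lambda>k l. \<not> config_edge H \<tau> \<alpha> L x u k l", OF in_S no_edge]
    by (simp add: isolated_singleton_def shift_config_def edge)
qed

lemma measurable_htil:
  assumes [measurable]: "H \<in> borel_measurable borel" "f \<in> borel_measurable M" "g \<in> borel_measurable M"
  shows "(\<lambda>\<omega>. htil H \<tau> \<alpha> L (f \<omega>) (g \<omega>)) \<in> borel_measurable M"
  unfolding htil_def rhoL_def by measurable

lemma sets_isolated_singleton:
  assumes H: "H \<in> borel_measurable borel" and S [measurable]: "S \<in> sets borel"
  shows "{c. isolated_singleton H \<tau> \<alpha> L S n (fst c) (snd c)} \<in> sets (config_measure L)"
proof -
  have [measurable]: "(\<lambda>c. htil H \<tau> \<alpha> L (fst c k) (fst c l)) \<in> borel_measurable (config_measure L)" for k l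
    by (intro measurable_htil H measurable_config_point)
  have "{c. isolated_singleton H \<tau> \<alpha> L S n (fst c) (snd c)} = {c \<in> space (config_measure L).
      (\<exists>k<n. fst c k \<in> S \<and> (\<forall>l<n. fst c l \<in> S \<longrightarrow> l = k)) \<and>
      (\<forall>k<n. fst c k \<in> S \<longrightarrow> (\<forall>l<n. \<not> (k \<noteq> l \<and> snd c (min k l, max k l) < htil H \<tau> \<alpha> L (fst c k) (fst c l))))}"
    by (auto simp: isolated_singleton_def config_edge_def card_1_singleton_iff set_eq_iff)
  also have "\<dots> \<in> sets (config_measure L)"
    by measurable
  finally show ?thesis .
qed

lemma poisson_split_segments:
  assumes H [measurable]: "H \<in> borel_measurable borel" and L: "L > 0" and C: "finite C"
    and R: "R \<in> sets borel" "segA m i \<subseteq> R" "rhoL_separated (real L) (edge_range H \<tau> \<alpha> L) (segA m i) (- R)"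
    and far: "\<And>j. j \<in> C \<Longrightarrow> rhoL_separated (real L) (edge_range H \<tau> \<alpha> L) (segA m j) R"
  shows "poisson_split L R (isolated_singleton H \<tau> \<alpha> L (segA m i))
           (\<lambda>n x u. \<forall>j\<in>C. isolated_singleton H \<tau> \<alpha> L (segA m j) n x u = b j)"
proof unfold_locales
  have [measurable]: "Measurable.pred (config_measure L) (\<lambda>c. isolated_singleton H \<tau> \<alpha> L (segA m j) n (fst c) (snd c))"
    for j n
    using sets_isolated_singleton[OF H, of "segA m j"] by (simp add: pred_def segA_def)
  show "{c. isolated_singleton H \<tau> \<alpha> L (segA m i) n (fst c) (snd c)} \<in> sets (config_measure L)" for n
    by (simp add: sets_isolated_singleton segA_def)
  have "{c \<in> space (config_measure L). \<forall>j\<in>C. isolated_singleton H \<tau> \<alpha> L (segA m j) n (fst c) (snd c) = b j}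
      \<in> sets (config_measure L)" for n
    using C by measurable
  then show "{c. \<forall>j\<in>C. isolated_singleton H \<tau> \<alpha> L (segA m j) n (fst c) (snd c) = b j} \<in> sets (config_measure L)" for n
    by simp
  show "isolated_singleton H \<tau> \<alpha> L (segA m i) n x u = isolated_singleton H \<tau> \<alpha> L (segA m i) n x' u'"
    and "(\<forall>j\<in>C. isolated_singleton H \<tau> \<alpha> L (segA m j) n x u = b j)
           = (\<forall>j\<in>C. isolated_singleton H \<tau> \<alpha> L (segA m j) n x' u' = b j)"
    if "\<And>k. k < n \<Longrightarrow> x k = x' k" "\<And>a b. a < n \<Longrightarrow> b < n \<Longrightarrow> u (a, b) = u' (a, b)" for n x x' u u'
    using isolated_singleton_cong[of n x x' u u', OF that] by simp_all
  show "isolated_singleton H \<tau> \<alpha> L (segA m i) n (x \<circ> \<pi>) (u \<circ> pair_perm \<pi>) = isolated_singleton H \<tau> \<alpha> L (segA m i) n x u"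
    and "(\<forall>j\<in>C. isolated_singleton H \<tau> \<alpha> L (segA m j) n (x \<circ> \<pi>) (u \<circ> pair_perm \<pi>) = b j)
           = (\<forall>j\<in>C. isolated_singleton H \<tau> \<alpha> L (segA m j) n x u = b j)"
    if "\<pi> permutes {..<n}" for n \<pi> x u
    using isolated_singleton_permute[OF that] by simp_all
  show "isolated_singleton H \<tau> \<alpha> L (segA m i) n x u = isolated_singleton H \<tau> \<alpha> L (segA m i) r x u"
    if "valid_config L x u" "r \<le> n" "\<And>k. k < n \<Longrightarrow> x k \<in> R \<longleftrightarrow> k < r" for n r x u
    using isolated_singleton_inside[OF R(2,3) that] .
  show "(\<forall>j\<in>C. isolated_singleton H \<tau> \<alpha> L (segA m j) n x u = b j) =
      (\<forall>j\<in>C. isolated_singleton H \<tau> \<alpha> L (segA m j) (n - r)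
               (fst (shift_config r (x, u))) (snd (shift_config r (x, u))) = b j)"
    if "valid_config L x u" "r \<le> n" "\<And>k. k < n \<Longrightarrow> x k \<in> R \<longleftrightarrow> k < r" for n r x u
    using isolated_singleton_outside[OF far that] by simp
qed (use L R in auto)

lemma sets_PPP_event_isolated_singleton:
  assumes "H \<in> borel_measurable borel" and "L > 0"
  shows "PPP_event (isolated_singleton H \<tau> \<alpha> L (segA m j)) \<in> sets (PPP_space L)"
  using PPP_event_sums(1)[OF assms(2) sets_isolated_singleton[OF assms(1)]] by (simp add: segA_def)

lemma PPP_indep_far_segments:
  fixes v :: "nat \<Rightarrow> real"
  assumes H: "H \<in> borel_measurable borel" and L: "L > 0" and i: "i \<in> Gamma m L"
    and range: "0 < edge_range H \<tau> \<alpha> L \<Longrightarrow> 1 / real m < edge_range H \<tau> \<alpha> L"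
    and v: "v \<in> (Gamma m L - Bnb H \<tau> \<alpha> L m i) \<rightarrow>\<^sub>E {0, 1}"
  defines "E \<equiv> PPP_event (isolated_singleton H \<tau> \<alpha> L (segA m i))"
    and "atom \<equiv> {\<omega>. \<forall>j \<in> Gamma m L - Bnb H \<tau> \<alpha> L m i. Iind H \<tau> \<alpha> L m j \<omega> = v j}"
  shows "measure (PPP_space L) (E \<inter> atom) = measure (PPP_space L) E * measure (PPP_space L) atom"
proof -
  obtain R where R: "R \<in> sets borel" "segA m i \<subseteq> R"
      "rhoL_separated (real L) (edge_range H \<tau> \<alpha> L) (segA m i) (- R)"
      "\<And>j. j \<in> Gamma m L \<Longrightarrow> 3 * edge_range H \<tau> \<alpha> L < rhoL (real L) (centre m i) (centre m j) \<Longrightarrow>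
         rhoL_separated (real L) (edge_range H \<tau> \<alpha> L) (segA m j) R"
    using obtain_separating_region[OF i powr_ge_zero range] by blast
  have far: "rhoL_separated (real L) (edge_range H \<tau> \<alpha> L) (segA m j) R"
    if "j \<in> Gamma m L - Bnb H \<tau> \<alpha> L m i" for j
    using that R(4) by (auto simp: Bnb_def not_le)
  define far_pattern where "far_pattern = (\<lambda>n x u. \<forall>j \<in> Gamma m L - Bnb H \<tau> \<alpha> L m i.
      isolated_singleton H \<tau> \<alpha> L (segA m j) n x u = (v j = 1))"
  interpret poisson_split L R "isolated_singleton H \<tau> \<alpha> L (segA m i)" far_pattern
    unfolding far_pattern_def using H L R(1-3) far by (intro poisson_split_segments) (simp_all add: Gamma_def)
  have "atom = PPP_event far_pattern"
    using v by (force simp: atom_def Iind_eq_indicator PPP_event_def far_pattern_def indicator_def PiE_iff)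
  moreover have "E \<inter> PPP_event far_pattern
      = PPP_event (\<lambda>n x u. isolated_singleton H \<tau> \<alpha> L (segA m i) n x u \<and> far_pattern n x u)"
    by (auto simp: E_def PPP_event_def)
  ultimately show ?thesis
    using PPP_indep by (simp add: E_def)
qed

lemma sets_Fout:
  "sets (Fout H \<tau> \<alpha> L m i) = sigma_sets (space (PPP_space L))
     (\<Union>j \<in> Gamma m L - Bnb H \<tau> \<alpha> L m i. {Iind H \<tau> \<alpha> L m j -` B \<inter> space (PPP_space L) | B. B \<in> sets borel})"
  unfolding Fout_def by (rule sets_measure_of) auto

lemma subalgebra_Fout:
  assumes "H \<in> borel_measurable borel" and "L > 0"
  shows "subalgebra (PPP_space L) (Fout H \<tau> \<alpha> L m i)"
proof -
  have "(\<Union>j \<in> Gamma m L - Bnb H \<tau> \<alpha> L m i. {Iind H \<tau> \<alpha> L m j -` B \<inter> space (PPP_space L) | B. B \<in> sets borel})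
      \<subseteq> sets (PPP_space L)"
    unfolding Iind_eq_indicator
    using measurable_sets[OF borel_measurable_indicator[OF sets_PPP_event_isolated_singleton[OF assms]]]
    by auto
  from sets.sigma_sets_subset[OF this] have "sets (Fout H \<tau> \<alpha> L m i) \<subseteq> sets (PPP_space L)"
    unfolding sets_Fout .
  moreover have "space (Fout H \<tau> \<alpha> L m i) = space (PPP_space L)"
    unfolding Fout_def by (rule space_measure_of) auto
  ultimately show ?thesis
    unfolding subalgebra_def by simp
qed

lemma AE_real_cond_exp_Iind:
  assumes H: "H \<in> borel_measurable borel" and L: "L > 0" and i: "i \<in> Gamma m L"
    and range: "0 < edge_range H \<tau> \<alpha> L \<Longrightarrow> 1 / real m < edge_range H \<tau> \<alpha> L"
  shows "AE \<omega> in PPP_space L. real_cond_exp (PPP_space L) (Fout H \<tau> \<alpha> L m i) (Iind H \<tau> \<alpha> L m i) \<omega>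
           = pI H \<tau> \<alpha> L m i"
proof -
  interpret PPP: prob_space "PPP_space L"
    using L by (rule prob_space_PPP_space)
  let ?E = "\<lambda>j. PPP_event (isolated_singleton H \<tau> \<alpha> L (segA m j))"
  have E: "?E j \<in> PPP.events" for j
    using H L by (rule sets_PPP_event_isolated_singleton)
  have indep: "PPP.prob (A \<inter> ?E i) = PPP.prob A * PPP.prob (?E i)" if "A \<in> sets (Fout H \<tau> \<alpha> L m i)" for A
  proof (rule PPP.indep_sigma_sets_finite_range[where V = "{0, 1}"])
    show "finite (Gamma m L - Bnb H \<tau> \<alpha> L m i)"
      by (simp add: Gamma_def)
    show "Iind H \<tau> \<alpha> L m j \<in> borel_measurable (PPP_space L)" for j
      unfolding Iind_eq_indicator using E by (rule borel_measurable_indicator)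
    show "Iind H \<tau> \<alpha> L m j \<omega> \<in> {0, 1}" for j \<omega>
      by (simp add: Iind_eq_indicator indicator_def)
    show "A \<in> sigma_sets (space (PPP_space L)) (\<Union>j \<in> Gamma m L - Bnb H \<tau> \<alpha> L m i.
        {Iind H \<tau> \<alpha> L m j -` B \<inter> space (PPP_space L) | B. B \<in> sets borel})"
      using that by (simp only: sets_Fout)
    show "PPP.prob (?E i \<inter> {\<omega> \<in> space (PPP_space L). \<forall>j \<in> Gamma m L - Bnb H \<tau> \<alpha> L m i. Iind H \<tau> \<alpha> L m j \<omega> = v j})
        = PPP.prob (?E i) * PPP.prob {\<omega> \<in> space (PPP_space L). \<forall>j \<in> Gamma m L - Bnb H \<tau> \<alpha> L m i. Iind H \<tau> \<alpha> L m j \<omega> = v j}"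
      if "v \<in> (Gamma m L - Bnb H \<tau> \<alpha> L m i) \<rightarrow>\<^sub>E {0, 1}" for v
      using PPP_indep_far_segments[OF H L i range that] by simp
  qed (use E in simp_all)
  moreover have "pI H \<tau> \<alpha> L m i = PPP.prob (?E i)"
    using E by (simp add: pI_def Iind_eq_indicator)
  ultimately show ?thesis
    using PPP.AE_real_cond_exp_indicator_indep[OF subalgebra_Fout[OF H L] E] by (simp add: Iind_eq_indicator)
qed

lemma b3_eq_0:
  assumes H: "H \<in> borel_measurable borel" and L: "L > 0"
    and range: "0 < edge_range H \<tau> \<alpha> L \<Longrightarrow> 1 / real m < edge_range H \<tau> \<alpha> L"
  shows "b3 H \<tau> \<alpha> L m = 0"
  unfolding b3_def
proof (intro sum.neutral ballI)
  fix i assume "i \<in> Gamma m L"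
  with AE_real_cond_exp_Iind[OF H L _ range]
  have "AE \<omega> in PPP_space L.
      \<bar>real_cond_exp (PPP_space L) (Fout H \<tau> \<alpha> L m i) (Iind H \<tau> \<alpha> L m i) \<omega> - pI H \<tau> \<alpha> L m i\<bar> = 0"
    by (auto elim!: AE_mp)
  then show "(\<integral>\<omega>. \<bar>real_cond_exp (PPP_space L) (Fout H \<tau> \<alpha> L m i) (Iind H \<tau> \<alpha> L m i) \<omega> - pI H \<tau> \<alpha> L m i\<bar>
      \<partial>PPP_space L) = 0"
    by (rule integral_eq_zero_AE)
qed

text \<open>
  Only measurability of \<open>H\<close> and \<open>L > 0\<close> are used: the remaining hypotheses make \<open>R\<^sub>L\<close> a meaningful
  scale, but the argument works for every value of the connection range \<open>R\<^sub>L\<^bsup>1+1/\<alpha>\<^esup>\<close>.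
\<close>
theorem lemma4:
  fixes H :: "real \<Rightarrow> real" and \<tau> \<alpha> :: real and L :: nat
  assumes "H \<in> borel_measurable borel"
    and "\<And>x. x \<ge> 0 \<Longrightarrow> 0 \<le> H x \<and> H x \<le> 1"
    and "set_integrable lborel {0..} H"
    and "(LBINT x:{0..}. (H x)\<^sup>2) < (LBINT x:{0..}. H x)"
    and "\<tau> > 0" and "\<alpha> > 0" and "L > 0"
  shows "\<exists>m0. \<forall>m \<ge> m0. b3 H \<tau> \<alpha> L m = 0"
proof (intro exI[of _ "nat \<lceil>1 / edge_range H \<tau> \<alpha> L\<rceil> + 1"] allI impI)
  fix m assume m: "nat \<lceil>1 / edge_range H \<tau> \<alpha> L\<rceil> + 1 \<le> m"
  show "b3 H \<tau> \<alpha> L m = 0"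
  proof (rule b3_eq_0[OF assms(1,7)])
    assume T: "0 < edge_range H \<tau> \<alpha> L"
    have "1 / edge_range H \<tau> \<alpha> L < real m"
      using m real_nat_ceiling_ge[of "1 / edge_range H \<tau> \<alpha> L"] by linarith
    moreover have "0 < real m"
      using m by simp
    ultimately show "1 / real m < edge_range H \<tau> \<alpha> L"
      using T by (simp add: field_simps)
  qed
qed

end
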